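(* Let $\Phi\in C^1(V,\mathbb{R})$ be twice continuously differentiable on a neighbourhood of $B_{++}$, with $\nabla\Phi(w,u)\in V_{++}$ for all $(w,u)\in S_+\cup B_{++}$, so that $G^\Phi:B_{++}\to B_{++}$ is well defined. Suppose there is a matrix $A\in\mathbb{R}^{(K+1)\times(K+1)}_+$ such that $F=G^\Phi$ and $A$ satisfy, for all $i,k\in[K]$, $j,a\in[n_1]$, $b\in[d]$ and $(w,u)\in B_{++}$, $$\langle|\nabla_{w_k}F_{w_{i,j}}|,w_k\rangle\le A_{i,k}F_{w_{i,j}},\ \ \langle|\nabla_u F_{w_{i,j}}|,u\rangle\le A_{i,K+1}F_{w_{i,j}},\ \ \langle|\nabla_{w_k}F_{u_{ab}}|,w_k\rangle\le A_{K+1,k}F_{u_{ab}},\ \ \langle|\nabla_u F_{u_{ab}}|,u\rangle\le A_{K+1,K+1}F_{u_{ab}}$$ (all evaluated at $(w,u)$), and that $A^T$ has an eigenvector $\gamma\in\mathbb{R}^{K+1}_{++}$. If $\rho(A)<1$, then $\Phi$ has a unique critical point $(w^*,u^* )$ on $S_{++}$ (in the sense of existence of Lagrange multipliers $\lambda_j$ with $\nabla_{w_j}\Phi=\lambda_j\psi_{p_w}(w_j)$, $\nabla_u\Phi=\lambda_{K+1}\psi_{p_u}(u)$), and it is the global maximizer of $\Phi$ on $S_+$. Moreover, for every $(w^0,u^0)\in S_{++}$ the sequence $(w^{k+1},u^{k+1})=G^\Phi(w^k,u^k)$ converges to $(w^*,u^* )$ and $$\|(w^k,u^k)-(w^*,u^*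 )\|_\infty\le\rho(A)^k\,\frac{\mu_\gamma\big((w^1,u^1),(w^0,u^0)\big)}{(1-\rho(A))\min\big\{\frac{\gamma_{K+1}}{\rho_u},\min_{t\in[K]}\frac{\gamma_t}{\rho_w}\big\}}\qquad\forall k\in\mathbb{N}.$$
   Context: $\mathbb{R}_+=[0,\infty)$, $\mathbb{R}_{++}=(0,\infty)$. $V=\mathbb{R}^{K\times n_1}\times\mathbb{R}^{n_1\times d}$, $V_{++}=\mathbb{R}^{K\times n_1}_{++}\times\mathbb{R}^{n_1\times d}_{++}$; $w$ has rows $w_1,\dots,w_K$; $\|\cdot\|_p$ of a matrix is the entrywise $\ell_p$ norm; $\|\cdot\|_\infty$ is the maximum absolute entry. Given $p_w,p_u\in(1,\infty)$ and $\rho_w,\rho_u>0$: $S_+=\{(w,u)\in\mathbb{R}^{K\times n_1}_+\times\mathbb{R}^{n_1\times d}_+ : \|u\|_{p_u}=\rho_u,\ \|w_i\|_{p_w}=\rho_w\ \forall i\}$, $S_{++}=S_+\cap V_{++}$, $B_{++}=\{(w,u)\in V_{++} : \|u\|_{p_u}\le\rho_u,\ \|w_i\|_{p_w}\le\rho_w\ \forall i\}$. For $p\in(1,\infty)$, $p'=p/(p-1)$, $\psi_p(z)=\operatorname{sign}(z)|z|^{p-1}$ componentwise. $$G^{\Phi}(w,u)=\Big(\tfrac{\rho_w\psi_{p_w'}(\nabla_{w_1}\Phi)}{\|\psi_{p_w'}(\nabla_{w_1}\Phi)\|_{p_w}},\dots,\tfrac{\rho_w\psi_{p_w'}(\nabla_{w_K}\Phi)}{\|\psi_{p_w'}(\nabla_{w_K}\Phi)\|_{p_w}},\tfrac{\rho_u\psi_{p_u'}(\nabla_u\Phi)}{\|\psi_{p_u'}(\nabla_u\Phi)\|_{p_u}}\Big)(w,u),$$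 with components $F_{w_{i,j}}$, $F_{u_{ab}}$ of $F=G^\Phi$. $|\cdot|$ is entrywise absolute value, $\langle\cdot,\cdot\rangle$ the Frobenius inner product, $\rho(A)$ the spectral radius. For $\gamma\in\mathbb{R}^{K+1}_{++}$, $\mu_\gamma((w,u),(\tilde w,\tilde u))=\sum_{i=1}^K\gamma_i\|\ln w_i-\ln\tilde w_i\|_\infty+\gamma_{K+1}\|\ln u-\ln\tilde u\|_\infty$ ($\ln$ entrywise). *)

theory Defs
  imports "HOL-Analysis.Analysis"
begin

(* Points of V = R^{K x n1} x R^{n1 x d} are pairs (w,u) with
   w :: real^'n^'k  (row i is w$i :: real^'n, the vector w_i)
   u :: real^'d^'n.  K = CARD('k), n1 = CARD('n), d = CARD('d). *)

definition C1_on :: "'a::real_normed_vector set \<Rightarrow> ('a \<Rightarrow> 'b::real_normed_vector) \<Rightarrow> bool" where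
  "C1_on S f \<longleftrightarrow> (\<exists>f'. (\<forall>x\<in>S. (f has_derivative blinfun_apply (f' x)) (at x)) \<and> continuous_on S f')"

definition C2_on :: "'a::real_normed_vector set \<Rightarrow> ('a \<Rightarrow> 'b::real_normed_vector) \<Rightarrow> bool" where
  "C2_on S f \<longleftrightarrow> (\<exists>f'. (\<forall>x\<in>S. (f has_derivative blinfun_apply (f' x)) (at x)) \<and> C1_on S f')"

definition dw :: "((real^'n^'k) \<times> (real^'d^'n) \<Rightarrow> real) \<Rightarrow> (real^'n^'k) \<times> (real^'d^'n) \<Rightarrow> 'k \<Rightarrow> 'n \<Rightarrow> real" where
  "dw f x i j = deriv (\<lambda>t. f (fst x + t *\<^sub>R axis i (axis j 1), snd x)) 0"

definition du :: "((real^'n^'k) \<times> (real^'d^'n) \<Rightarrow> real) \<Rightarrow> (real^'n^'k) \<times> (real^'d^'n) \<Rightarrow> 'n \<Rightarrow> 'd \<Rightarrow> real" where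
  "du f x a b = deriv (\<lambda>t. f (fst x, snd x + t *\<^sub>R axis a (axis b 1))) 0"

definition gradw :: "((real^'n^'k) \<times> (real^'d^'n) \<Rightarrow> real) \<Rightarrow> (real^'n^'k) \<times> (real^'d^'n) \<Rightarrow> 'k \<Rightarrow> real^'n" where
  "gradw f x i = (\<chi> j. dw f x i j)"

definition gradu :: "((real^'n^'k) \<times> (real^'d^'n) \<Rightarrow> real) \<Rightarrow> (real^'n^'k) \<times> (real^'d^'n) \<Rightarrow> real^'d^'n" where
  "gradu f x = (\<chi> a b. du f x a b)"

definition vnorm :: "real \<Rightarrow> real^'n \<Rightarrow> real" where
  "vnorm p v = (\<Sum>j\<in>UNIV. \<bar>v$j\<bar> powr p) powr (1/p)"

definition mnorm :: "real \<Rightarrow> real^'d^'n \<Rightarrow> real" where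
  "mnorm p u = (\<Sum>a\<in>UNIV. \<Sum>b\<in>UNIV. \<bar>u$a$b\<bar> powr p) powr (1/p)"

definition conj_exp :: "real \<Rightarrow> real" where
  "conj_exp p = p / (p - 1)"

definition psi :: "real \<Rightarrow> real \<Rightarrow> real" where
  "psi p z = sgn z * \<bar>z\<bar> powr (p - 1)"

definition vpsi :: "real \<Rightarrow> real^'n \<Rightarrow> real^'n" where
  "vpsi p v = (\<chi> j. psi p (v$j))"

definition mpsi :: "real \<Rightarrow> real^'d^'n \<Rightarrow> real^'d^'n" where
  "mpsi p u = (\<chi> a b. psi p (u$a$b))"

definition GPhi :: "real \<Rightarrow> real \<Rightarrow> real \<Rightarrow> real \<Rightarrow> ((real^'n^'k) \<times> (real^'d^'n) \<Rightarrow> real)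
    \<Rightarrow> (real^'n^'k) \<times> (real^'d^'n) \<Rightarrow> (real^'n^'k) \<times> (real^'d^'n)" where
  "GPhi pw pu rw ru \<Phi> x =
     ((\<chi> i. (rw / vnorm pw (vpsi (conj_exp pw) (gradw \<Phi> x i))) *\<^sub>R vpsi (conj_exp pw) (gradw \<Phi> x i)),
      (ru / mnorm pu (mpsi (conj_exp pu) (gradu \<Phi> x))) *\<^sub>R mpsi (conj_exp pu) (gradu \<Phi> x))"

definition Vpp :: "((real^'n^'k) \<times> (real^'d^'n)) set" where
  "Vpp = {(w,u). (\<forall>i j. w$i$j > 0) \<and> (\<forall>a b. u$a$b > 0)}"

definition Splus :: "real \<Rightarrow> real \<Rightarrow> real \<Rightarrow> real \<Rightarrow> ((real^'n^'k) \<times> (real^'d^'n)) set" where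
  "Splus pw pu rw ru = {(w,u). (\<forall>i j. w$i$j \<ge> 0) \<and> (\<forall>a b. u$a$b \<ge> 0) \<and>
      mnorm pu u = ru \<and> (\<forall>i. vnorm pw (w$i) = rw)}"

definition Spp :: "real \<Rightarrow> real \<Rightarrow> real \<Rightarrow> real \<Rightarrow> ((real^'n^'k) \<times> (real^'d^'n)) set" where
  "Spp pw pu rw ru = Splus pw pu rw ru \<inter> Vpp"

definition Bpp :: "real \<Rightarrow> real \<Rightarrow> real \<Rightarrow> real \<Rightarrow> ((real^'n^'k) \<times> (real^'d^'n)) set" where
  "Bpp pw pu rw ru = {(w,u). (w,u) \<in> Vpp \<and> mnorm pu u \<le> ru \<and> (\<forall>i. vnorm pw (w$i) \<le> rw)}"

definition is_crit :: "real \<Rightarrow> real \<Rightarrow> ((real^'n^'k) \<times> (real^'d^'n) \<Rightarrow> real) \<Rightarrow> (real^'n^'k) \<times> (real^'d^'n) \<Rightarrow> bool" where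
  "is_crit pw pu \<Phi> x \<longleftrightarrow> (\<exists>(lam::'k \<Rightarrow> real) lamu.
      (\<forall>j l. dw \<Phi> x j l = lam j * psi pw (fst x $ j $ l)) \<and>
      (\<forall>a b. du \<Phi> x a b = lamu * psi pu (snd x $ a $ b)))"

definition spec_rad :: "real^'m^'m \<Rightarrow> real" where
  "spec_rad A = Max {cmod c | c. \<exists>v::complex^'m. v \<noteq> 0 \<and>
       (\<forall>i. (\<Sum>j\<in>UNIV. complex_of_real (A$i$j) * v$j) = c * v$i)}"

definition supnorm :: "(real^'n^'k) \<times> (real^'d^'n) \<Rightarrow> real" where
  "supnorm x = max (Max {\<bar>fst x $ i $ j\<bar> | i j. True}) (Max {\<bar>snd x $ a $ b\<bar> | a b. True})"

(* \<mu>_\<gamma>; index None of \<gamma> plays the role of K+1, Some i the role of i *)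
definition mu_gamma :: "real^('k option) \<Rightarrow> (real^'n^'k) \<times> (real^'d^'n) \<Rightarrow> (real^'n^'k) \<times> (real^'d^'n) \<Rightarrow> real" where
  "mu_gamma \<gamma> x y =
     (\<Sum>i\<in>UNIV. \<gamma>$(Some i) * Max {\<bar>ln (fst x $ i $ j) - ln (fst y $ i $ j)\<bar> | j. True})
     + \<gamma>$None * Max {\<bar>ln (snd x $ a $ b) - ln (snd y $ a $ b)\<bar> | a b. True}"

end

theory Submission
  imports Defs
begin

text \<open>
  The map \<open>G = G\<^sup>\<Phi>\<close> sends the positive ball \<open>B\<^sub>+\<^sub>+\<close> into the positive sphere \<open>S\<^sub>+\<^sub>+\<close>,
  and its fixed points on \<open>S\<^sub>+\<^sub>+\<close> are exactly the Lagrange critical points of \<open>\<Phi>\<close>, because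
  \<open>\<psi>\<^sub>p\<close> and \<open>\<psi>\<^sub>p\<^sub>'\<close> are inverse to each other.
  Along the log-linear segment between two points of \<open>B\<^sub>+\<^sub>+\<close>, the mean value theorem turns the
  hypotheses on the partial derivatives of the components of \<open>G\<close> into the componentwise
  estimate \<open>d(G x, G y) \<le> A d(x, y)\<close> for the vector \<open>d\<close> of maximal differences of logarithms
  in each block. Pairing with the positive left eigenvector \<open>\<gamma>\<close> shows that \<open>G\<close> contracts
  \<open>\<mu>\<^sub>\<gamma> = \<langle>\<gamma>, d\<rangle>\<close> by the eigenvalue \<open>\<theta>\<close>, and \<open>0 \<le> \<theta> \<le> \<rho>(A) < 1\<close>. Hence the
  iterates converge geometrically to the unique fixed point on \<open>S\<^sub>+\<^sub>+\<close>; the sup-norm error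
  bound follows from \<open>|a - b| \<le> r |ln a - ln b|\<close> for entries bounded by the radius \<open>r\<close>.
  Finally \<open>\<Phi>\<close> attains its maximum on the compact set \<open>S\<^sub>+\<close>; since \<open>\<nabla>\<Phi> > 0\<close>, a maximizer
  cannot have zero entries, so it satisfies the Lagrange conditions and is that fixed point.
\<close>

section \<open>The duality map \<open>\<psi>\<^sub>p\<close> and \<open>\<ell>\<^sub>p\<close>-norms\<close>

lemma conj_exp_mult_eq_one: "p > 1 \<Longrightarrow> (p - 1) * (conj_exp p - 1) = 1"
  unfolding conj_exp_def by (simp add: field_simps)

lemma psi_pos_eq: "z > 0 \<Longrightarrow> psi p z = z powr (p - 1)"
  unfolding psi_def by simp

lemma psi_pos: "z > 0 \<Longrightarrow> psi p z > 0"
  unfolding psi_def by simp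

lemma psi_psi_inverse:
  assumes "z > 0" "(p - 1) * (q - 1) = 1"
  shows "psi q (psi p z) = z"
  using assms by (simp add: psi_pos_eq psi_pos powr_powr)

lemma psi_mult:
  assumes "z > 0" "c > 0"
  shows "psi p (c * z) = c powr (p - 1) * psi p z"
  using assms by (simp add: psi_pos_eq powr_mult)

lemma has_real_derivative_abs_powr_0:
  fixes p :: real
  assumes p: "p > 1"
  shows "((\<lambda>s. \<bar>s\<bar> powr p) has_real_derivative 0) (at 0)"
proof -
  have "((\<lambda>y. (\<bar>y\<bar> powr p - \<bar>0\<bar> powr p) / (y - 0)) \<longlongrightarrow> 0) (at 0)"
  proof (rule Lim_null_comparison)
    show "\<forall>\<^sub>F y in at 0. norm ((\<bar>y\<bar> powr p - \<bar>0\<bar> powr p) / (y - 0)) \<le> \<bar>y\<bar> powr (p - 1)"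
    proof (rule always_eventually, rule allI)
      fix y :: real
      show "norm ((\<bar>y\<bar> powr p - \<bar>0\<bar> powr p) / (y - 0)) \<le> \<bar>y\<bar> powr (p - 1)"
      proof (cases "y = 0")
        case False
        then have "\<bar>y\<bar> powr p = \<bar>y\<bar> powr (p - 1) * \<bar>y\<bar>"
          using powr_add[of "\<bar>y\<bar>" "p - 1" 1] by simp
        then show ?thesis using False p by (simp add: abs_divide)
      qed simp
    qed
    have "((\<lambda>y. \<bar>y\<bar> powr (p - 1)) \<longlongrightarrow> \<bar>0\<bar> powr (p - 1)) (at (0::real))"
      using p by (intro tendsto_powr' tendsto_rabs tendsto_ident_at tendsto_const) auto
    then show "((\<lambda>y. \<bar>y\<bar> powr (p - 1)) \<longlongrightarrow> 0) (at 0)" by simp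
  qed
  then show ?thesis
    by (simp add: has_field_derivative_iff)
qed

lemma has_real_derivative_abs_powr:
  fixes p s :: real
  assumes p: "p > 1"
  shows "((\<lambda>s. \<bar>s\<bar> powr p) has_real_derivative p * psi p s) (at s)"
proof -
  consider "s > 0" | "s < 0" | "s = 0" by linarith
  then show ?thesis
  proof cases
    case 1
    show ?thesis
    proof (rule has_field_derivative_transform_within_open[where f="\<lambda>z. z powr p" and S="{0<..}"])
      show "((\<lambda>z. z powr p) has_real_derivative p * psi p s) (at s)"
        using 1 by (auto intro!: derivative_eq_intros simp: psi_def)
    qed (use 1 in auto)
  next
    case 2
    show ?thesis
    proof (rule has_field_derivative_transform_within_open[where f="\<lambda>z. (- z) powr p" and S="{..<0}"])
      show "((\<lambda>z. (- z) powr p) has_real_derivative p * psi p s) (at s)"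
        using 2 by (auto intro!: derivative_eq_intros simp: psi_def)
    qed (use 2 in auto)
  next
    case 3
    then show ?thesis
      using has_real_derivative_abs_powr_0[OF p] by (simp add: psi_def)
  qed
qed

lemma psi_has_real_derivative:
  assumes "s > 0"
  shows "(psi q has_real_derivative (q - 1) * s powr (q - 1 - 1)) (at s)"
proof (rule has_field_derivative_transform_within_open[where f="\<lambda>z. z powr (q - 1)" and S="{0<..}"])
  show "((\<lambda>z. z powr (q - 1)) has_real_derivative (q - 1) * s powr (q - 1 - 1)) (at s)"
    by (rule has_real_derivative_powr) (use assms in auto)
qed (use assms in \<open>auto simp: psi_def\<close>)

definition lp_norm :: "real \<Rightarrow> 'a set \<Rightarrow> ('a \<Rightarrow> real) \<Rightarrow> real" where
  "lp_norm p S f = (\<Sum>l\<in>S. \<bar>f l\<bar> powr p) powr (1/p)"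

lemma vnorm_eq_lp_norm: "vnorm p v = lp_norm p UNIV (\<lambda>j. v $ j)"
  unfolding vnorm_def lp_norm_def ..

lemma mnorm_eq_lp_norm: "mnorm p u = lp_norm p UNIV (\<lambda>z. u $ fst z $ snd z)"
  unfolding mnorm_def lp_norm_def by (simp add: sum.cartesian_product case_prod_beta)

lemma lp_norm_scale:
  assumes "c \<ge> 0" "p > 0"
  shows "lp_norm p S (\<lambda>l. c * f l) = c * lp_norm p S f"
proof -
  have "(\<Sum>l\<in>S. \<bar>c * f l\<bar> powr p) = c powr p * (\<Sum>l\<in>S. \<bar>f l\<bar> powr p)"
    using assms by (simp add: abs_mult powr_mult sum_distrib_left)
  then show ?thesis
    using assms unfolding lp_norm_def by (simp add: powr_mult powr_powr sum_nonneg)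
qed

lemma abs_le_lp_norm:
  assumes "finite S" "l \<in> S" "p > 0"
  shows "\<bar>f l\<bar> \<le> lp_norm p S f"
proof -
  have "\<bar>f l\<bar> powr p \<le> (\<Sum>l\<in>S. \<bar>f l\<bar> powr p)"
    using assms by (intro member_le_sum) auto
  then have "(\<bar>f l\<bar> powr p) powr (1/p) \<le> (\<Sum>l\<in>S. \<bar>f l\<bar> powr p) powr (1/p)"
    using assms by (intro powr_mono2) auto
  then show ?thesis
    using assms unfolding lp_norm_def by (simp add: powr_powr)
qed

lemma lp_norm_pos:
  assumes "finite S" "l \<in> S" "f l \<noteq> 0" "p > 0"
  shows "lp_norm p S f > 0"
  using abs_le_lp_norm[OF assms(1,2,4), of f] assms(3) by linarith

lemma abs_le_vnorm: "p > 0 \<Longrightarrow> \<bar>v $ j\<bar> \<le> vnorm p v"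
  unfolding vnorm_eq_lp_norm by (rule abs_le_lp_norm[where f="\<lambda>j. v $ j"]) auto

lemma abs_le_mnorm: "p > 0 \<Longrightarrow> \<bar>u $ a $ b\<bar> \<le> mnorm p u"
  unfolding mnorm_eq_lp_norm
  using abs_le_lp_norm[where l="(a, b)" and f="\<lambda>z. u $ fst z $ snd z"] by simp

lemma lp_norm_cong: "(\<And>l. l \<in> S \<Longrightarrow> f l = g l) \<Longrightarrow> lp_norm p S f = lp_norm p S g"
  unfolding lp_norm_def by (simp cong: sum.cong)

text \<open>The left-hand side says that \<open>v\<close> is the normalised dual \<open>\<rho> \<psi>\<^sub>p\<^sub>'(g) / \<parallel>\<psi>\<^sub>p\<^sub>'(g)\<parallel>\<^sub>p\<close>
  of \<open>g\<close>; the equivalence holds because \<open>\<psi>\<^sub>p\<close> and \<open>\<psi>\<^sub>p\<^sub>'\<close> are mutually inverse and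
  positively homogeneous on the positive reals.\<close>

lemma normalized_dual_eq_iff_lagrange:
  fixes g v :: "'a \<Rightarrow> real"
  assumes S: "finite S" "S \<noteq> {}" and p: "p > 1" and \<rho>: "\<rho> > 0" and g: "\<forall>l\<in>S. g l > 0"
  shows "(\<forall>l\<in>S. v l = \<rho> / lp_norm p S (\<lambda>l. psi (conj_exp p) (g l)) * psi (conj_exp p) (g l))
     \<longleftrightarrow> lp_norm p S v = \<rho> \<and> (\<forall>l\<in>S. v l > 0) \<and> (\<exists>lam. \<forall>l\<in>S. g l = lam * psi p (v l))"
    (is "?fixed \<longleftrightarrow> ?lagrange")
proof
  let ?q = "conj_exp p"
  let ?N = "lp_norm p S (\<lambda>l. psi ?q (g l))"
  obtain l0 where l0: "l0 \<in> S" using S(2) by blast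
  have q: "(?q - 1) * (p - 1) = 1" using conj_exp_mult_eq_one[OF p] by (simp add: mult.commute)
  have N: "?N > 0" using S(1) l0 g p by (intro lp_norm_pos[OF _ l0]) (auto simp: psi_pos less_imp_neq[symmetric])
  define c where "c = \<rho> / ?N"
  have c: "c > 0" unfolding c_def using \<rho> N by simp
  assume ?fixed
  then have v: "\<forall>l\<in>S. v l = c * psi ?q (g l)" unfolding c_def by blast
  have "lp_norm p S v = c * ?N"
    using lp_norm_cong[of S v "\<lambda>l. c * psi ?q (g l)" p] v c p by (simp add: lp_norm_scale)
  moreover have "g l = (1 / c) powr (p - 1) * psi p (v l)" if "l \<in> S" for l
    using that v c g psi_mult[of "psi ?q (g l)" c p] psi_psi_inverse[OF _ q, of "g l"]
    by (simp add: psi_pos powr_divide)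
  moreover have "\<forall>l\<in>S. v l > 0" using v c g by (simp add: psi_pos)
  ultimately show ?lagrange using N by (auto simp: c_def)
next
  let ?q = "conj_exp p"
  have q: "(p - 1) * (?q - 1) = 1" using conj_exp_mult_eq_one[OF p] .
  assume ?lagrange
  then obtain lam where nv: "lp_norm p S v = \<rho>" and v: "\<forall>l\<in>S. v l > 0"
    and lam: "\<forall>l\<in>S. g l = lam * psi p (v l)" by blast
  obtain l0 where l0: "l0 \<in> S" using S(2) by blast
  have "lam > 0"
    using g lam v l0 psi_pos[of "v l0" p] by (metis zero_less_mult_pos2)
  then have dual: "psi ?q (g l) = lam powr (?q - 1) * v l" if "l \<in> S" for l
    using that lam v psi_mult[of "psi p (v l)" lam ?q] psi_psi_inverse[OF _ q] by (simp add: psi_pos)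
  have "lp_norm p S (\<lambda>l. psi ?q (g l)) = lam powr (?q - 1) * \<rho>"
    using lp_norm_cong[of S "\<lambda>l. psi ?q (g l)" "\<lambda>l. lam powr (?q - 1) * v l" p] dual nv p
    by (simp add: lp_norm_scale)
  then show ?fixed using dual \<open>lam > 0\<close> \<rho> by simp
qed

section \<open>Fixed points of \<open>G\<^sup>\<Phi>\<close> and critical points\<close>

lemma Spp_iff:
  "x \<in> Spp pw pu rw ru \<longleftrightarrow> (\<forall>i j. fst x $ i $ j > 0) \<and> (\<forall>a b. snd x $ a $ b > 0)
     \<and> (\<forall>i. vnorm pw (fst x $ i) = rw) \<and> mnorm pu (snd x) = ru"
  by (cases x) (auto simp: Spp_def Splus_def Vpp_def less_imp_le)

lemma Bpp_iff:
  "x \<in> Bpp pw pu rw ru \<longleftrightarrow> (\<forall>i j. fst x $ i $ j > 0) \<and> (\<forall>a b. snd x $ a $ b > 0)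
     \<and> (\<forall>i. vnorm pw (fst x $ i) \<le> rw) \<and> mnorm pu (snd x) \<le> ru"
  by (cases x) (auto simp: Bpp_def Vpp_def)

lemma Spp_subset_Bpp: "Spp pw pu rw ru \<subseteq> Bpp pw pu rw ru"
  by (auto simp: Spp_iff Bpp_iff)

lemma GPhi_fst_eq:
  "fst (GPhi pw pu rw ru \<Phi> x) $ i $ j
     = rw / lp_norm pw UNIV (\<lambda>l. psi (conj_exp pw) (dw \<Phi> x i l)) * psi (conj_exp pw) (dw \<Phi> x i j)"
  by (simp add: GPhi_def vnorm_eq_lp_norm vpsi_def gradw_def)

lemma GPhi_snd_eq:
  "snd (GPhi pw pu rw ru \<Phi> x) $ a $ b
     = ru / lp_norm pu UNIV (\<lambda>z. psi (conj_exp pu) (du \<Phi> x (fst z) (snd z))) * psi (conj_exp pu) (du \<Phi> x a b)"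
  by (simp add: GPhi_def mnorm_eq_lp_norm mpsi_def gradu_def)

lemma GPhi_row_eq_iff:
  assumes "pw > 1" "rw > 0" "\<forall>j. dw \<Phi> x i j > 0"
  shows "fst (GPhi pw pu rw ru \<Phi> x) $ i = v
     \<longleftrightarrow> vnorm pw v = rw \<and> (\<forall>j. v $ j > 0) \<and> (\<exists>lam. \<forall>j. dw \<Phi> x i j = lam * psi pw (v $ j))"
proof -
  have "fst (GPhi pw pu rw ru \<Phi> x) $ i = v \<longleftrightarrow>
      (\<forall>j\<in>UNIV. v $ j = rw / lp_norm pw UNIV (\<lambda>l. psi (conj_exp pw) (dw \<Phi> x i l)) * psi (conj_exp pw) (dw \<Phi> x i j))"
    by (auto simp: vec_eq_iff GPhi_fst_eq)
  also have "\<dots> \<longleftrightarrow> vnorm pw v = rw \<and> (\<forall>j. v $ j > 0) \<and> (\<exists>lam. \<forall>j. dw \<Phi> x i j = lam * psi pw (v $ j))"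
    using normalized_dual_eq_iff_lagrange[of UNIV pw rw "\<lambda>j. dw \<Phi> x i j" "\<lambda>j. v $ j"] assms
    by (simp add: vnorm_eq_lp_norm)
  finally show ?thesis .
qed

lemma GPhi_snd_eq_iff:
  assumes "pu > 1" "ru > 0" "\<forall>a b. du \<Phi> x a b > 0"
  shows "snd (GPhi pw pu rw ru \<Phi> x) = u
     \<longleftrightarrow> mnorm pu u = ru \<and> (\<forall>a b. u $ a $ b > 0) \<and> (\<exists>lam. \<forall>a b. du \<Phi> x a b = lam * psi pu (u $ a $ b))"
proof -
  have "snd (GPhi pw pu rw ru \<Phi> x) = u \<longleftrightarrow>
      (\<forall>z\<in>UNIV. u $ fst z $ snd z = ru / lp_norm pu UNIV (\<lambda>z. psi (conj_exp pu) (du \<Phi> x (fst z) (snd z)))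
         * psi (conj_exp pu) (du \<Phi> x (fst z) (snd z)))"
    by (auto simp: vec_eq_iff GPhi_snd_eq)
  also have "\<dots> \<longleftrightarrow> mnorm pu u = ru \<and> (\<forall>a b. u $ a $ b > 0) \<and> (\<exists>lam. \<forall>a b. du \<Phi> x a b = lam * psi pu (u $ a $ b))"
    using normalized_dual_eq_iff_lagrange[of UNIV pu ru "\<lambda>z. du \<Phi> x (fst z) (snd z)" "\<lambda>z. u $ fst z $ snd z"] assms
    by (simp add: mnorm_eq_lp_norm)
  finally show ?thesis .
qed

lemma GPhi_in_Spp:
  assumes "pw > 1" "pu > 1" "rw > 0" "ru > 0" "\<forall>i j. dw \<Phi> x i j > 0" "\<forall>a b. du \<Phi> x a b > 0"
  shows "GPhi pw pu rw ru \<Phi> x \<in> Spp pw pu rw ru"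
  using GPhi_row_eq_iff[OF assms(1,3), of \<Phi> x _ pu ru] GPhi_snd_eq_iff[OF assms(2,4), of \<Phi> x pw rw]
    assms(5,6) unfolding Spp_iff by blast

lemma GPhi_fixed_iff_crit:
  assumes "pw > 1" "pu > 1" "rw > 0" "ru > 0" "\<forall>i j. dw \<Phi> x i j > 0" "\<forall>a b. du \<Phi> x a b > 0"
  shows "GPhi pw pu rw ru \<Phi> x = x \<longleftrightarrow> x \<in> Spp pw pu rw ru \<and> is_crit pw pu \<Phi> x"
proof -
  have row: "fst (GPhi pw pu rw ru \<Phi> x) $ i = fst x $ i \<longleftrightarrow> vnorm pw (fst x $ i) = rw
      \<and> (\<forall>j. fst x $ i $ j > 0) \<and> (\<exists>lam. \<forall>j. dw \<Phi> x i j = lam * psi pw (fst x $ i $ j))" for i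
    using GPhi_row_eq_iff[OF assms(1,3)] assms(5) by blast
  have "(\<forall>i. fst (GPhi pw pu rw ru \<Phi> x) $ i = fst x $ i) \<longleftrightarrow>
      (\<forall>i. vnorm pw (fst x $ i) = rw) \<and> (\<forall>i j. fst x $ i $ j > 0)
      \<and> (\<exists>lam. \<forall>i j. dw \<Phi> x i j = lam i * psi pw (fst x $ i $ j))"
    unfolding row by (simp add: all_conj_distrib choice_iff)
  moreover have "GPhi pw pu rw ru \<Phi> x = x \<longleftrightarrow>
      (\<forall>i. fst (GPhi pw pu rw ru \<Phi> x) $ i = fst x $ i) \<and> snd (GPhi pw pu rw ru \<Phi> x) = snd x"
    by (auto simp: prod_eq_iff vec_eq_iff)
  ultimately show ?thesis
    unfolding GPhi_snd_eq_iff[OF assms(2,4,6)] Spp_iff is_crit_def by blast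
qed

section \<open>Left eigenvalues and the spectral radius\<close>

lemma eigenvectors_distinct_eigenvalues_independent:
  fixes B :: "complex^'m^'m" and V :: "complex \<Rightarrow> complex^'m"
  assumes "finite C" "\<forall>c\<in>C. V c \<noteq> 0 \<and> B *v V c = c *s V c"
  shows "\<forall>a. (\<Sum>c\<in>C. a c *s V c) = 0 \<longrightarrow> (\<forall>c\<in>C. a c = 0)"
  using assms
proof (induction C rule: finite_induct)
  case empty
  then show ?case by simp
next
  case (insert d C)
  show ?case
  proof (intro allI impI)
    fix a assume "(\<Sum>c\<in>insert d C. a c *s V c) = 0"
    then have sum0: "a d *s V d + (\<Sum>c\<in>C. a c *s V c) = 0"
      using insert by simp
    have eig: "B *v (a c *s V c) = (a c * c) *s V c" if "c \<in> insert d C" for c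
      using insert.prems that by (auto simp: vec.scale vector_smult_assoc)
    have "B *v (a d *s V d + (\<Sum>c\<in>C. a c *s V c)) = 0" using sum0 by simp
    then have "(a d * d) *s V d + (\<Sum>c\<in>C. (a c * c) *s V c) = 0"
      using eig by (simp add: matrix_vector_right_distrib vec.sum)
    moreover have "(a d * d) *s V d + (\<Sum>c\<in>C. (a c * d) *s V c) = 0"
      using arg_cong[OF sum0, of "(*s) d"]
      by (simp add: vec_eq_iff sum_component sum_distrib_left mult_ac)
    ultimately have "(\<Sum>c\<in>C. (a c * c) *s V c) = (\<Sum>c\<in>C. (a c * d) *s V c)"
      by (metis add_left_cancel)
    then have "(\<Sum>c\<in>C. (a c * (c - d)) *s V c) = 0"
      by (simp add: right_diff_distrib vector_sub_rdistrib sum_subtractf)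
    moreover have "\<forall>a. (\<Sum>c\<in>C. a c *s V c) = 0 \<longrightarrow> (\<forall>c\<in>C. a c = 0)"
      by (rule insert.IH) (use insert.prems in simp)
    ultimately have "\<forall>c\<in>C. a c = 0"
      using insert.hyps by fastforce
    moreover then have "a d = 0"
      using sum0 insert.prems by (auto simp: vec_eq_iff)
    ultimately show "\<forall>c\<in>insert d C. a c = 0" by simp
  qed
qed

lemma finite_eigenvalues:
  fixes A :: "real^'m^'m"
  shows "finite {c. \<exists>v::complex^'m. v \<noteq> 0 \<and>
       (\<forall>i. (\<Sum>j\<in>UNIV. complex_of_real (A$i$j) * v$j) = c * v$i)}" (is "finite ?S")
proof (rule ccontr)
  assume inf: "infinite ?S"
  let ?B = "(\<chi> i j. complex_of_real (A$i$j)) :: complex^'m^'m"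
  define V where "V c = (SOME v. v \<noteq> 0 \<and> ?B *v v = c *s v)" for c
  have V: "V c \<noteq> 0 \<and> ?B *v V c = c *s V c" if "c \<in> ?S" for c
  proof -
    have eq: "(\<forall>i. (\<Sum>j\<in>UNIV. complex_of_real (A$i$j) * v$j) = c * v$i) \<longleftrightarrow> ?B *v v = c *s v" for v
      by (simp add: matrix_vector_mult_def vec_eq_iff)
    show ?thesis unfolding V_def by (rule someI_ex) (use that eq in blast)
  qed
  obtain C where C: "C \<subseteq> ?S" "finite C" "card C = Suc CARD('m)"
    using infinite_arbitrarily_large[OF inf] by blast
  have VC: "\<forall>c\<in>C. V c \<noteq> 0 \<and> ?B *v V c = c *s V c" using V C(1) by blast
  have inj: "inj_on V C"
  proof
    fix c d assume "c \<in> C" "d \<in> C" "V c = V d"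
    then have "c *s V c = d *s V c" using VC by metis
    then have "(c - d) *s V c = 0" by (simp add: vector_sub_rdistrib)
    then show "c = d" using VC \<open>c \<in> C\<close> by (auto simp: vec_eq_iff)
  qed
  have "vec.independent (V ` C)"
    unfolding vec.independent_explicit
  proof (intro conjI allI impI ballI)
    show "finite (V ` C)" using C by simp
  next
    fix k v assume "(\<Sum>v\<in>V ` C. k v *s v) = 0" and v: "v \<in> V ` C"
    then have "(\<Sum>c\<in>C. (k \<circ> V) c *s V c) = 0" using inj by (simp add: sum.reindex)
    then show "k v = 0"
      using eigenvectors_distinct_eigenvalues_independent[OF C(2) VC] v by auto
  qed
  then have "card (V ` C) \<le> vec.dim (V ` C)"
    using vec.independent_bound_general by blast
  also have "\<dots> \<le> CARD('m)"
    using vec.dim_subset[of "V ` C" UNIV] vec_dim_card[where 'a=complex and 'n='m] by simp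
  finally have "card (V ` C) \<le> CARD('m)" .
  then show False using C(3) card_image[OF inj] by simp
qed

lemma real_eigenvalue_le_spec_rad:
  fixes A :: "real^'m^'m"
  assumes "v \<noteq> 0" "A *v v = \<theta> *s v"
  shows "\<bar>\<theta>\<bar> \<le> spec_rad A"
proof -
  let ?v = "(\<chi> i. complex_of_real (v$i)) :: complex^'m"
  have "?v \<noteq> 0" using assms(1) by (auto simp: vec_eq_iff)
  moreover have "(\<Sum>j\<in>UNIV. complex_of_real (A$i$j) * ?v$j) = complex_of_real \<theta> * ?v$i" for i
    using arg_cong[OF assms(2), of "\<lambda>w. complex_of_real (w $ i)"] by (simp add: matrix_vector_mult_def)
  ultimately have "cmod (complex_of_real \<theta>) \<in> {cmod c | c. \<exists>v::complex^'m. v \<noteq> 0 \<and>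
       (\<forall>i. (\<Sum>j\<in>UNIV. complex_of_real (A$i$j) * v$j) = c * v$i)}" by blast
  moreover have "finite {cmod c | c. \<exists>v::complex^'m. v \<noteq> 0 \<and>
       (\<forall>i. (\<Sum>j\<in>UNIV. complex_of_real (A$i$j) * v$j) = c * v$i)}"
    using finite_eigenvalues[of A] by (simp add: setcompr_eq_image)
  ultimately show ?thesis unfolding spec_rad_def by (simp add: Max_ge)
qed

lemma left_eigenvalue_le_spec_rad:
  fixes A :: "real^'m^'m"
  assumes "\<gamma> \<noteq> 0" "\<forall>s. (\<Sum>r\<in>UNIV. A$r$s * \<gamma>$r) = \<theta> * \<gamma>$s"
  shows "\<bar>\<theta>\<bar> \<le> spec_rad A"
proof -
  have mat: "(\<Sum>r\<in>UNIV. (if r = s then \<theta> else 0) * \<gamma> $ r) = \<theta> * \<gamma> $ s" for s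
  proof -
    have "(\<Sum>r\<in>UNIV. (if r = s then \<theta> else 0) * \<gamma> $ r) = (\<Sum>r\<in>UNIV. if r = s then \<theta> * \<gamma> $ r else 0)"
      by (rule sum.cong) auto
    then show ?thesis by simp
  qed
  have "transpose (A - mat \<theta>) *v \<gamma> = 0"
    using assms(2) mat by (simp add: vec_eq_iff matrix_vector_mult_def transpose_def mat_def
        left_diff_distrib sum_subtractf del: transpose_matrix_vector)
  then have "\<nexists>B. B ** transpose (A - mat \<theta>) = mat 1"
    using assms(1) matrix_left_invertible_ker by blast
  then have "\<nexists>B. B ** (A - mat \<theta>) = mat 1"
    using left_invertible_transpose matrix_left_right_inverse by blast
  then obtain v where "(A - mat \<theta>) *v v = 0" "v \<noteq> 0"
    using matrix_left_invertible_ker by blast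
  moreover have "(mat \<theta> *v v) $ i = \<theta> * v $ i" for i
  proof -
    have "(\<Sum>j\<in>UNIV. (if i = j then \<theta> else 0) * v $ j) = (\<Sum>j\<in>UNIV. if i = j then \<theta> * v $ j else 0)"
      by (rule sum.cong) auto
    then show ?thesis by (simp add: matrix_vector_mult_def mat_def)
  qed
  ultimately show ?thesis
    by (intro real_eigenvalue_le_spec_rad[of v]) (simp_all add: matrix_vector_mult_diff_rdistrib vec_eq_iff)
qed

lemma left_eigenvalue_nonneg:
  fixes A :: "real^'m^'m"
  assumes "\<forall>r s. A $ r $ s \<ge> 0" "\<forall>r. \<gamma> $ r > 0" "\<forall>s. (\<Sum>r\<in>UNIV. A $ r $ s * \<gamma> $ r) = \<theta> * \<gamma> $ s"
  shows "\<theta> \<ge> 0"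
proof -
  have "0 \<le> (\<Sum>r\<in>UNIV. A $ r $ s * \<gamma> $ r)" for s
    using assms(1,2) by (intro sum_nonneg) (simp add: less_imp_le)
  then show ?thesis
    using assms(2,3) by (metis zero_le_mult_iff not_less)
qed

lemma weighted_sum_le_left_eigenvalue:
  fixes A :: "real^'m^'m" and \<gamma> :: "real^'m" and d e :: "'m \<Rightarrow> real"
  assumes \<gamma>: "\<forall>r. \<gamma> $ r \<ge> 0" and eig: "\<forall>s. (\<Sum>r\<in>UNIV. A $ r $ s * \<gamma> $ r) = \<theta> * \<gamma> $ s"
    and e: "\<And>r. e r \<le> (\<Sum>s\<in>UNIV. A $ r $ s * d s)"
  shows "(\<Sum>r\<in>UNIV. \<gamma> $ r * e r) \<le> \<theta> * (\<Sum>s\<in>UNIV. \<gamma> $ s * d s)"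
proof -
  have "(\<Sum>r\<in>UNIV. \<gamma> $ r * e r) \<le> (\<Sum>r\<in>UNIV. \<gamma> $ r * (\<Sum>s\<in>UNIV. A $ r $ s * d s))"
    using \<gamma> e by (intro sum_mono mult_left_mono) auto
  also have "\<dots> = (\<Sum>r\<in>UNIV. \<Sum>s\<in>UNIV. \<gamma> $ r * A $ r $ s * d s)"
    by (simp add: sum_distrib_left mult.assoc)
  also have "\<dots> = (\<Sum>s\<in>UNIV. \<Sum>r\<in>UNIV. \<gamma> $ r * A $ r $ s * d s)"
    by (rule sum.swap)
  also have "\<dots> = (\<Sum>s\<in>UNIV. (\<Sum>r\<in>UNIV. A $ r $ s * \<gamma> $ r) * d s)"
    by (simp add: sum_distrib_left sum_distrib_right mult_ac)
  also have "\<dots> = \<theta> * (\<Sum>s\<in>UNIV. \<gamma> $ s * d s)"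
    using eig by (simp add: sum_distrib_left mult_ac)
  finally show ?thesis .
qed

definition unit_w :: "'k \<Rightarrow> 'n \<Rightarrow> (real^'n^'k) \<times> (real^'d^'n)" where
  "unit_w i j = (axis i (axis j 1), 0)"

definition unit_u :: "'n \<Rightarrow> 'd \<Rightarrow> (real^'n^'k) \<times> (real^'d^'n)" where
  "unit_u a b = (0, axis a (axis b 1))"

lemma has_real_derivative_along_line:
  fixes f :: "'a::real_normed_vector \<Rightarrow> real"
  assumes "(f has_derivative D) (at x)"
  shows "((\<lambda>t. f (x + t *\<^sub>R E)) has_real_derivative D E) (at 0)"
proof -
  have line: "((\<lambda>t. x + t *\<^sub>R E) has_derivative (\<lambda>h. h *\<^sub>R E)) (at 0)"
    by (auto intro!: derivative_eq_intros)
  have "((\<lambda>t. f (x + t *\<^sub>R E)) has_derivative (\<lambda>h. D (h *\<^sub>R E))) (at 0)"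
    using has_derivative_compose[OF line] assms by simp
  moreover have "(\<lambda>h. D (h *\<^sub>R E)) = (*) (D E)"
    using has_derivative_linear[OF assms] by (auto simp: linear_scale)
  ultimately show ?thesis by (simp add: has_field_derivative_def)
qed

lemma dw_eq_derivative:
  assumes "(f has_derivative D) (at x)"
  shows "dw f x i j = D (unit_w i j)"
proof -
  have "(\<lambda>t. f (fst x + t *\<^sub>R axis i (axis j 1), snd x)) = (\<lambda>t. f (x + t *\<^sub>R unit_w i j))"
    by (cases x) (simp add: unit_w_def)
  then show ?thesis
    unfolding dw_def using DERIV_imp_deriv[OF has_real_derivative_along_line[OF assms]] by simp
qed

lemma du_eq_derivative:
  assumes "(f has_derivative D) (at x)"
  shows "du f x a b = D (unit_u a b)"
proof -
  have "(\<lambda>t. f (fst x, snd x + t *\<^sub>R axis a (axis b 1))) = (\<lambda>t. f (x + t *\<^sub>R unit_u a b))"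
    by (cases x) (simp add: unit_u_def)
  then show ?thesis
    unfolding du_def using DERIV_imp_deriv[OF has_real_derivative_along_line[OF assms]] by simp
qed

lemma sum_delta_mult:
  assumes "finite S" "a \<in> S"
  shows "(\<Sum>l\<in>S. f l * (if l = a then c else 0)) = f a * (c::real)"
proof -
  have "(\<Sum>l\<in>S. f l * (if l = a then c else 0)) = (\<Sum>l\<in>S. if l = a then f l * c else 0)"
    by (rule sum.cong) auto
  then show ?thesis using assms by simp
qed

lemma axis_axis_nth:
  "(axis i (axis j 1) :: real^'b^'a) $ i0 $ j0 = (if i = i0 then if j = j0 then 1 else 0 else 0)"
  by (auto simp: axis_def)

lemma matrix_eq_sum_axis:
  fixes w :: "real^'b^'a"
  shows "(\<Sum>i\<in>UNIV. \<Sum>j\<in>UNIV. w $ i $ j *\<^sub>R axis i (axis j 1)) = w"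
proof -
  have delta: "(\<Sum>i\<in>UNIV. \<Sum>j\<in>UNIV. w $ i $ j * (if i = i0 then if j = j0 then 1 else 0 else 0)) = w $ i0 $ j0"
    for i0 j0
  proof -
    have "(\<Sum>i\<in>UNIV. \<Sum>j\<in>UNIV. w $ i $ j * (if i = i0 then if j = j0 then 1 else 0 else 0))
        = (\<Sum>i\<in>UNIV. if i = i0 then (\<Sum>j\<in>UNIV. w $ i $ j * (if j = j0 then 1 else 0)) else 0)"
      by (intro sum.cong) auto
    then show ?thesis by (simp add: sum_delta_mult)
  qed
  show ?thesis
    by (simp only: vec_eq_iff sum_component vector_scaleR_component axis_axis_nth real_scaleR_def delta) simp
qed

lemma point_eq_sum_units:
  fixes w :: "real^'n^'k" and u :: "real^'d^'n"
  shows "(w, u) = (\<Sum>i\<in>UNIV. \<Sum>j\<in>UNIV. w $ i $ j *\<^sub>R unit_w i j)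
    + (\<Sum>a\<in>UNIV. \<Sum>b\<in>UNIV. u $ a $ b *\<^sub>R unit_u a b)"
  by (simp add: prod_eq_iff fst_sum snd_sum unit_w_def unit_u_def matrix_eq_sum_axis)

lemma linear_apply_point:
  fixes D :: "(real^'n^'k) \<times> (real^'d^'n) \<Rightarrow> real"
  assumes "linear D"
  shows "D (w, u) = (\<Sum>i\<in>UNIV. \<Sum>j\<in>UNIV. w $ i $ j * D (unit_w i j))
    + (\<Sum>a\<in>UNIV. \<Sum>b\<in>UNIV. u $ a $ b * D (unit_u a b))"
  by (subst point_eq_sum_units) (simp add: assms linear_add linear_sum linear_scale)

lemma partial_derivatives_differentiable:
  fixes \<Phi> :: "(real^'n^'k) \<times> (real^'d^'n) \<Rightarrow> real"
  assumes "open U" "z \<in> U" "C2_on U \<Phi>"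
  shows "(\<lambda>y. dw \<Phi> y i j) differentiable (at z)" "(\<lambda>y. du \<Phi> y a b) differentiable (at z)"
proof -
  obtain f' f'' where d1: "\<forall>x\<in>U. (\<Phi> has_derivative blinfun_apply (f' x)) (at x)"
    and d2: "\<forall>x\<in>U. (f' has_derivative blinfun_apply (f'' x)) (at x)"
    using assms(3) unfolding C2_on_def C1_on_def by blast
  have h: "((\<lambda>y. blinfun_apply (f' y) E) has_derivative (\<lambda>h. blinfun_apply (blinfun_apply (f'' z) h) E)) (at z)"
    for E :: "(real^'n^'k) \<times> (real^'d^'n)"
    using bounded_linear.has_derivative[OF bounded_bilinear.bounded_linear_left[OF bounded_bilinear_blinfun_apply]
        d2[rule_format, OF assms(2)]] .
  have "((\<lambda>y. dw \<Phi> y i j) has_derivative (\<lambda>h. blinfun_apply (blinfun_apply (f'' z) h) (unit_w i j))) (at z)"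
    by (rule has_derivative_transform_within_open[OF h assms(1,2)]) (use d1 dw_eq_derivative in metis)
  then show "(\<lambda>y. dw \<Phi> y i j) differentiable (at z)" unfolding differentiable_def by blast
  have "((\<lambda>y. du \<Phi> y a b) has_derivative (\<lambda>h. blinfun_apply (blinfun_apply (f'' z) h) (unit_u a b))) (at z)"
    by (rule has_derivative_transform_within_open[OF h assms(1,2)]) (use d1 du_eq_derivative in metis)
  then show "(\<lambda>y. du \<Phi> y a b) differentiable (at z)" unfolding differentiable_def by blast
qed

lemma differentiable_compose_real_derivative:
  fixes f :: "'a::real_normed_vector \<Rightarrow> real"
  assumes "(h has_real_derivative d) (at (f z))" "f differentiable (at z)"
  shows "(\<lambda>y. h (f y)) differentiable (at z)"
proof -
  have "h differentiable (at (f z))"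
    using assms(1) unfolding differentiable_def by (auto dest: has_field_derivative_imp_has_derivative)
  then show ?thesis using differentiable_compose assms(2) by blast
qed

lemma differentiable_normalized_psi:
  fixes g :: "'j \<Rightarrow> 'x::real_normed_vector \<Rightarrow> real"
  assumes S: "finite S" "i \<in> S" and p: "p > 1"
    and d: "\<forall>l\<in>S. g l differentiable (at z)" and pos: "\<forall>l\<in>S. g l z > 0"
  shows "(\<lambda>y. r / lp_norm p S (\<lambda>l. psi q (g l y)) * psi q (g i y)) differentiable (at z)"
proof -
  have psi: "(\<lambda>y. psi q (g l y)) differentiable (at z)" if "l \<in> S" for l
    using d pos that by (intro differentiable_compose_real_derivative[OF psi_has_real_derivative]) auto
  have "(\<lambda>y. \<Sum>l\<in>S. \<bar>psi q (g l y)\<bar> powr p) differentiable (at z)"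
    using psi p S(1) by (intro differentiable_sum ballI differentiable_compose_real_derivative[OF has_real_derivative_abs_powr]) auto
  moreover have "(\<Sum>l\<in>S. \<bar>psi q (g l z)\<bar> powr p) > 0"
    using lp_norm_pos[OF S, of "\<lambda>l. psi q (g l z)" p] pos S(2) p
      sum_nonneg[of S "\<lambda>l. \<bar>psi q (g l z)\<bar> powr p"]
    by (force simp: lp_norm_def psi_pos less_imp_neq[symmetric])
  ultimately have "(\<lambda>y. lp_norm p S (\<lambda>l. psi q (g l y))) differentiable (at z)"
    unfolding lp_norm_def
    by (rule differentiable_compose_real_derivative[OF has_real_derivative_powr, rotated])
  moreover have "lp_norm p S (\<lambda>l. psi q (g l z)) \<noteq> 0"
    using lp_norm_pos[OF S, of "\<lambda>l. psi q (g l z)" p] pos S(2) p psi_pos[of "g i z" q] by auto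
  ultimately show ?thesis
    using psi[OF S(2)] by (intro differentiable_mult differentiable_divide) auto
qed

section \<open>Log-linear segments and the distance \<open>\<mu>\<^sub>\<gamma>\<close>\<close>

lemma sum_powr_convex_combination_le:
  fixes a b :: "'j \<Rightarrow> real"
  assumes S: "finite S" "S \<noteq> {}" and ab: "\<forall>j\<in>S. a j > 0 \<and> b j > 0" and t: "0 \<le> t" "t \<le> 1"
  shows "(\<Sum>j\<in>S. a j powr (1 - t) * b j powr t) \<le> (\<Sum>j\<in>S. a j) powr (1 - t) * (\<Sum>j\<in>S. b j) powr t"
proof -
  define A where "A = (\<Sum>j\<in>S. a j)"
  define B where "B = (\<Sum>j\<in>S. b j)"
  have A: "A > 0" unfolding A_def using S ab by (intro sum_pos) auto
  have B: "B > 0" unfolding B_def using S ab by (intro sum_pos) auto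
  define C where "C = A powr (1 - t) * B powr t"
  have C: "C > 0" unfolding C_def using A B by simp
  have "a j powr (1 - t) * b j powr t / C \<le> (1 - t) * (a j / A) + t * (b j / B)" if "j \<in> S" for j
  proof -
    have "(a j / A) powr (1 - t) * (b j / B) powr t \<le> (1 - t) * (a j / A) + t * (b j / B)"
      using that ab A B t by (intro Youngs_inequality_0) auto
    then show ?thesis
      using that ab A B unfolding C_def by (simp add: powr_divide)
  qed
  then have "(\<Sum>j\<in>S. a j powr (1 - t) * b j powr t / C) \<le> (\<Sum>j\<in>S. (1 - t) * (a j / A) + t * (b j / B))"
    by (rule sum_mono)
  also have "\<dots> = (1 - t) * (\<Sum>j\<in>S. a j) / A + t * (\<Sum>j\<in>S. b j) / B"
    by (simp add: sum.distrib sum_distrib_left sum_divide_distrib)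
  also have "\<dots> = 1" using A B by (simp flip: A_def B_def)
  finally show ?thesis
    using C unfolding C_def[symmetric] A_def[symmetric] B_def[symmetric]
    by (simp add: divide_le_eq flip: sum_divide_distrib)
qed

lemma lp_norm_powr_convex_combination_le:
  fixes a b :: "'j \<Rightarrow> real"
  assumes S: "finite S" "S \<noteq> {}" and ab: "\<forall>j\<in>S. a j > 0 \<and> b j > 0" and t: "0 \<le> t" "t \<le> 1"
    and p: "p > 0" and a_le: "lp_norm p S a \<le> r" and b_le: "lp_norm p S b \<le> r"
  shows "lp_norm p S (\<lambda>j. a j powr (1 - t) * b j powr t) \<le> r"
proof -
  define A where "A = (\<Sum>j\<in>S. a j powr p)"
  define B where "B = (\<Sum>j\<in>S. b j powr p)"
  have A: "A > 0" unfolding A_def using S ab by (intro sum_pos) auto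
  have B: "B > 0" unfolding B_def using S ab by (intro sum_pos) auto
  have "(\<Sum>j\<in>S. \<bar>a j\<bar> powr p) = A"
    unfolding A_def by (rule sum.cong) (use ab in auto)
  moreover have "(\<Sum>j\<in>S. \<bar>b j\<bar> powr p) = B"
    unfolding B_def by (rule sum.cong) (use ab in auto)
  ultimately have rA: "A powr (1/p) \<le> r" and rB: "B powr (1/p) \<le> r"
    using a_le b_le unfolding lp_norm_def by simp_all
  have "(\<Sum>j\<in>S. \<bar>a j powr (1 - t) * b j powr t\<bar> powr p)
      = (\<Sum>j\<in>S. (a j powr p) powr (1 - t) * (b j powr p) powr t)"
    using ab by (intro sum.cong) (auto simp: powr_mult powr_powr mult.commute)
  also have "\<dots> \<le> A powr (1 - t) * B powr t"
    unfolding A_def B_def using S ab t by (intro sum_powr_convex_combination_le) auto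
  finally have "lp_norm p S (\<lambda>j. a j powr (1 - t) * b j powr t) \<le> (A powr (1 - t) * B powr t) powr (1/p)"
    unfolding lp_norm_def using p by (intro powr_mono2) (auto intro: sum_nonneg)
  also have "\<dots> = (A powr (1/p)) powr (1 - t) * (B powr (1/p)) powr t"
    using A B by (simp add: powr_mult powr_powr mult.commute)
  also have "\<dots> \<le> r powr (1 - t) * r powr t"
    using rA rB A B t by (intro mult_mono powr_mono2) auto
  also have "\<dots> = r"
  proof -
    have "r > 0" using rA A by (metis powr_gt_zero less_le_trans order_less_irrefl)
    then show ?thesis by (simp flip: powr_add)
  qed
  finally show ?thesis .
qed

definition log_segment ::
    "(real^'n^'k) \<times> (real^'d^'n) \<Rightarrow> (real^'n^'k) \<times> (real^'d^'n) \<Rightarrow> real \<Rightarrow> (real^'n^'k) \<times> (real^'d^'n)" where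
  "log_segment x y t = ((\<chi> i j. exp ((1 - t) * ln (fst x $ i $ j) + t * ln (fst y $ i $ j))),
                        (\<chi> a b. exp ((1 - t) * ln (snd x $ a $ b) + t * ln (snd y $ a $ b))))"

definition log_segment_velocity ::
    "(real^'n^'k) \<times> (real^'d^'n) \<Rightarrow> (real^'n^'k) \<times> (real^'d^'n) \<Rightarrow> real \<Rightarrow> (real^'n^'k) \<times> (real^'d^'n)" where
  "log_segment_velocity x y t =
     ((\<chi> i j. fst (log_segment x y t) $ i $ j * (ln (fst y $ i $ j) - ln (fst x $ i $ j))),
      (\<chi> a b. snd (log_segment x y t) $ a $ b * (ln (snd y $ a $ b) - ln (snd x $ a $ b))))"

lemma exp_convex_combination_ln:
  fixes a b :: real
  assumes "a > 0" "b > 0"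
  shows "exp ((1 - t) * ln a + t * ln b) = a powr (1 - t) * b powr t"
  using assms by (simp add: powr_def exp_add)

lemma log_segment_0: "x \<in> Vpp \<Longrightarrow> log_segment x y 0 = x"
  by (cases x) (simp add: log_segment_def Vpp_def vec_eq_iff)

lemma log_segment_1: "y \<in> Vpp \<Longrightarrow> log_segment x y 1 = y"
  by (cases y) (simp add: log_segment_def Vpp_def vec_eq_iff)

lemma log_segment_in_Bpp:
  assumes x: "x \<in> Bpp pw pu rw ru" and y: "y \<in> Bpp pw pu rw ru" and p: "pw > 0" "pu > 0"
    and t: "0 \<le> t" "t \<le> 1"
  shows "log_segment x y t \<in> Bpp pw pu rw ru"
proof -
  have xp: "\<forall>i j. fst x $ i $ j > 0" "\<forall>a b. snd x $ a $ b > 0" and yp: "\<forall>i j. fst y $ i $ j > 0" "\<forall>a b. snd y $ a $ b > 0"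
    using x y by (auto simp: Bpp_iff)
  have "vnorm pw (fst (log_segment x y t) $ i) \<le> rw" for i
  proof -
    have "vnorm pw (fst (log_segment x y t) $ i)
        = lp_norm pw UNIV (\<lambda>j. fst x $ i $ j powr (1 - t) * fst y $ i $ j powr t)"
      using xp yp by (simp add: vnorm_eq_lp_norm log_segment_def exp_convex_combination_ln)
    also have "\<dots> \<le> rw"
      using x y xp yp t p
      by (intro lp_norm_powr_convex_combination_le) (auto simp: Bpp_iff vnorm_eq_lp_norm)
    finally show ?thesis .
  qed
  moreover have "mnorm pu (snd (log_segment x y t)) \<le> ru"
  proof -
    have "mnorm pu (snd (log_segment x y t))
        = lp_norm pu UNIV (\<lambda>z. snd x $ fst z $ snd z powr (1 - t) * snd y $ fst z $ snd z powr t)"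
      using xp yp by (simp add: mnorm_eq_lp_norm log_segment_def exp_convex_combination_ln)
    also have "\<dots> \<le> ru"
      using x y xp yp t p
      by (intro lp_norm_powr_convex_combination_le) (auto simp: Bpp_iff mnorm_eq_lp_norm)
    finally show ?thesis .
  qed
  ultimately show ?thesis
    by (simp add: Bpp_iff log_segment_def)
qed

lemma log_segment_has_derivative:
  "(log_segment x y has_derivative (\<lambda>s. s *\<^sub>R log_segment_velocity x y t)) (at t)"
proof -
  let ?e = "\<lambda>t la lb. exp ((1 - t) * la + t * lb)"
  let ?lw = "\<lambda>z i j. ln (fst z $ i $ j)" and ?lu = "\<lambda>z a b. ln (snd z $ a $ b)"
  have d: "((\<lambda>t. ?e t la lb *\<^sub>R E) has_derivative (\<lambda>s. (s * (?e t la lb * (lb - la))) *\<^sub>R E)) (at t)"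
    for la lb and E :: "(real^'n^'k) \<times> (real^'d^'n)"
    by (auto intro!: derivative_eq_intros simp: algebra_simps)
  have "((\<lambda>t. (\<Sum>i\<in>UNIV. \<Sum>j\<in>UNIV. ?e t (?lw x i j) (?lw y i j) *\<^sub>R unit_w i j)
      + (\<Sum>a\<in>UNIV. \<Sum>b\<in>UNIV. ?e t (?lu x a b) (?lu y a b) *\<^sub>R unit_u a b)) has_derivative
    (\<lambda>s. (\<Sum>i\<in>UNIV. \<Sum>j\<in>UNIV. (s * (?e t (?lw x i j) (?lw y i j) * (?lw y i j - ?lw x i j))) *\<^sub>R unit_w i j)
      + (\<Sum>a\<in>UNIV. \<Sum>b\<in>UNIV. (s * (?e t (?lu x a b) (?lu y a b) * (?lu y a b - ?lu x a b))) *\<^sub>R unit_u a b)))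
    (at t)"
    by (intro has_derivative_add has_derivative_sum d)
  moreover have "log_segment x y = (\<lambda>t. (\<Sum>i\<in>UNIV. \<Sum>j\<in>UNIV. ?e t (?lw x i j) (?lw y i j) *\<^sub>R unit_w i j)
      + (\<Sum>a\<in>UNIV. \<Sum>b\<in>UNIV. ?e t (?lu x a b) (?lu y a b) *\<^sub>R unit_u a b))"
    unfolding log_segment_def by (subst point_eq_sum_units) simp
  moreover have "log_segment_velocity x y t =
      (\<Sum>i\<in>UNIV. \<Sum>j\<in>UNIV. (?e t (?lw x i j) (?lw y i j) * (?lw y i j - ?lw x i j)) *\<^sub>R unit_w i j)
      + (\<Sum>a\<in>UNIV. \<Sum>b\<in>UNIV. (?e t (?lu x a b) (?lu y a b) * (?lu y a b - ?lu x a b)) *\<^sub>R unit_u a b)"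
    unfolding log_segment_velocity_def log_segment_def by (subst point_eq_sum_units) simp
  ultimately show ?thesis
    by (simp add: scaleR_add_right scaleR_sum_right)
qed

lemma le_Max_setcompr: "(f :: 'a::finite \<Rightarrow> real) l \<le> Max {f l | l. True}"
  by (simp add: full_SetCompr_eq)

lemma Max_setcompr_le: "(\<And>l. (f :: 'a::finite \<Rightarrow> real) l \<le> B) \<Longrightarrow> Max {f l | l. True} \<le> B"
  by (simp add: full_SetCompr_eq)

lemma setcompr2_eq_image: "{f a b | a b. True} = (\<lambda>z. f (fst z) (snd z)) ` UNIV"
proof (rule set_eqI, rule iffI)
  fix v assume "v \<in> {f a b | a b. True}"
  then obtain a b where "v = f a b" by blast
  then show "v \<in> (\<lambda>z. f (fst z) (snd z)) ` UNIV" by (intro image_eqI[of _ _ "(a, b)"]) auto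
qed auto

lemma le_Max_setcompr2: "(f :: 'a::finite \<Rightarrow> 'b::finite \<Rightarrow> real) a b \<le> Max {f a b | a b. True}"
  unfolding setcompr2_eq_image by (rule Max_ge) (auto intro: image_eqI[of _ _ "(a, b)"])

lemma Max_setcompr2_le:
  "(\<And>a b. (f :: 'a::finite \<Rightarrow> 'b::finite \<Rightarrow> real) a b \<le> B) \<Longrightarrow> Max {f a b | a b. True} \<le> B"
  unfolding setcompr2_eq_image by simp

definition ln_dist_w :: "(real^'n^'k) \<times> (real^'d^'n) \<Rightarrow> (real^'n^'k) \<times> (real^'d^'n) \<Rightarrow> 'k \<Rightarrow> real" where
  "ln_dist_w x y i = Max {\<bar>ln (fst x $ i $ j) - ln (fst y $ i $ j)\<bar> | j. True}"

definition ln_dist_u :: "(real^'n^'k) \<times> (real^'d^'n) \<Rightarrow> (real^'n^'k) \<times> (real^'d^'n) \<Rightarrow> real" where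
  "ln_dist_u x y = Max {\<bar>ln (snd x $ a $ b) - ln (snd y $ a $ b)\<bar> | a b. True}"

lemma mu_gamma_eq: "mu_gamma \<gamma> x y = (\<Sum>i\<in>UNIV. \<gamma> $ Some i * ln_dist_w x y i) + \<gamma> $ None * ln_dist_u x y"
  unfolding mu_gamma_def ln_dist_w_def ln_dist_u_def ..

lemma abs_ln_diff_le_ln_dist_w: "\<bar>ln (fst x $ i $ j) - ln (fst y $ i $ j)\<bar> \<le> ln_dist_w x y i"
  unfolding ln_dist_w_def by (rule le_Max_setcompr)

lemma abs_ln_diff_le_ln_dist_u: "\<bar>ln (snd x $ a $ b) - ln (snd y $ a $ b)\<bar> \<le> ln_dist_u x y"
  unfolding ln_dist_u_def by (rule le_Max_setcompr2)

lemma ln_dist_w_nonneg: "ln_dist_w x y i \<ge> 0"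
  using abs_ln_diff_le_ln_dist_w[of x i undefined y] by linarith

lemma ln_dist_u_nonneg: "ln_dist_u x y \<ge> 0"
  using abs_ln_diff_le_ln_dist_u[of x undefined undefined y] by linarith

lemma ln_dist_w_commute: "ln_dist_w x y i = ln_dist_w y x i"
  unfolding ln_dist_w_def by (simp add: abs_minus_commute)

lemma ln_dist_u_commute: "ln_dist_u x y = ln_dist_u y x"
  unfolding ln_dist_u_def by (simp add: abs_minus_commute)

lemma ln_dist_w_triangle: "ln_dist_w x z i \<le> ln_dist_w x y i + ln_dist_w y z i"
  unfolding ln_dist_w_def[of x z]
proof (rule Max_setcompr_le)
  fix j
  show "\<bar>ln (fst x $ i $ j) - ln (fst z $ i $ j)\<bar> \<le> ln_dist_w x y i + ln_dist_w y z i"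
    using abs_ln_diff_le_ln_dist_w[of x i j y] abs_ln_diff_le_ln_dist_w[of y i j z] by linarith
qed

lemma ln_dist_u_triangle: "ln_dist_u x z \<le> ln_dist_u x y + ln_dist_u y z"
  unfolding ln_dist_u_def[of x z]
proof (rule Max_setcompr2_le)
  fix a b
  show "\<bar>ln (snd x $ a $ b) - ln (snd z $ a $ b)\<bar> \<le> ln_dist_u x y + ln_dist_u y z"
    using abs_ln_diff_le_ln_dist_u[of x a b y] abs_ln_diff_le_ln_dist_u[of y a b z] by linarith
qed

lemma mu_gamma_commute: "mu_gamma \<gamma> x y = mu_gamma \<gamma> y x"
  unfolding mu_gamma_eq by (simp add: ln_dist_w_commute ln_dist_u_commute)

lemma mu_gamma_self: "mu_gamma \<gamma> x x = 0"
  unfolding mu_gamma_def by simp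

lemma mu_gamma_nonneg: "\<forall>r. \<gamma> $ r \<ge> 0 \<Longrightarrow> mu_gamma \<gamma> x y \<ge> 0"
  unfolding mu_gamma_eq
  by (intro add_nonneg_nonneg sum_nonneg mult_nonneg_nonneg) (auto simp: ln_dist_w_nonneg ln_dist_u_nonneg)

lemma mu_gamma_triangle:
  assumes "\<forall>r. \<gamma> $ r \<ge> 0"
  shows "mu_gamma \<gamma> x z \<le> mu_gamma \<gamma> x y + mu_gamma \<gamma> y z"
proof -
  have "mu_gamma \<gamma> x z
      \<le> (\<Sum>i\<in>UNIV. \<gamma> $ Some i * (ln_dist_w x y i + ln_dist_w y z i)) + \<gamma> $ None * (ln_dist_u x y + ln_dist_u y z)"
    unfolding mu_gamma_eq
    using assms ln_dist_w_triangle[where x=x and y=y and z=z] ln_dist_u_triangle[where x=x and y=y and z=z]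
    by (intro add_mono sum_mono mult_left_mono) auto
  then show ?thesis
    unfolding mu_gamma_eq by (simp add: distrib_left sum.distrib)
qed

lemma ln_dist_w_le_mu_gamma:
  "\<forall>r. \<gamma> $ r \<ge> 0 \<Longrightarrow> \<gamma> $ Some i * ln_dist_w x y i \<le> mu_gamma \<gamma> x y"
  unfolding mu_gamma_eq
  by (intro add_increasing2 member_le_sum mult_nonneg_nonneg) (auto simp: ln_dist_w_nonneg ln_dist_u_nonneg)

lemma ln_dist_u_le_mu_gamma:
  "\<forall>r. \<gamma> $ r \<ge> 0 \<Longrightarrow> \<gamma> $ None * ln_dist_u x y \<le> mu_gamma \<gamma> x y"
  unfolding mu_gamma_eq
  by (intro add_increasing sum_nonneg mult_nonneg_nonneg) (auto simp: ln_dist_w_nonneg)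

lemma sum_UNIV_option: "(\<Sum>r\<in>UNIV. f r) = f None + (\<Sum>i\<in>UNIV. f (Some i))"
  for f :: "'a::finite option \<Rightarrow> 'b::comm_monoid_add"
  by (simp add: UNIV_option_conv sum.reindex)

definition ln_dist :: "(real^'n^'k) \<times> (real^'d^'n) \<Rightarrow> (real^'n^'k) \<times> (real^'d^'n) \<Rightarrow> 'k option \<Rightarrow> real" where
  "ln_dist x y r = (case r of Some i \<Rightarrow> ln_dist_w x y i | None \<Rightarrow> ln_dist_u x y)"

lemma mu_gamma_eq_sum_ln_dist: "mu_gamma \<gamma> x y = (\<Sum>r\<in>UNIV. \<gamma> $ r * ln_dist x y r)"
  by (simp add: mu_gamma_eq sum_UNIV_option ln_dist_def)

lemma abs_diff_le_mult_abs_ln_diff: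
  fixes a b r :: real
  assumes "0 < a" "0 < b" "a \<le> r" "b \<le> r"
  shows "\<bar>a - b\<bar> \<le> r * \<bar>ln a - ln b\<bar>"
proof -
  have "v - u \<le> r * (ln v - ln u)" if "0 < u" "u \<le> v" "v \<le> r" for u v :: real
  proof -
    have "ln (u / v) \<le> u / v - 1" using that by (intro ln_le_minus_one) auto
    then have "v - u \<le> v * (ln v - ln u)"
      using that by (simp add: ln_div field_simps)
    also have "\<dots> \<le> r * (ln v - ln u)"
      using that by (intro mult_right_mono) auto
    finally show ?thesis .
  qed
  then show ?thesis
    using assms by (cases "a \<le> b") (auto simp: abs_if)
qed

lemma abs_le_supnorm:
  fixes z :: "(real^'n::finite^'k::finite) \<times> (real^'d::finite^'n)"
  shows "\<bar>fst z $ i $ j\<bar> \<le> supnorm z" "\<bar>snd z $ a $ b\<bar> \<le> supnorm z"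
proof -
  have "\<bar>fst z $ i $ j\<bar> \<le> Max {\<bar>fst z $ i $ j\<bar> | i j. True}" by (rule le_Max_setcompr2)
  then show "\<bar>fst z $ i $ j\<bar> \<le> supnorm z" unfolding supnorm_def by simp
  have "\<bar>snd z $ a $ b\<bar> \<le> Max {\<bar>snd z $ a $ b\<bar> | a b. True}" by (rule le_Max_setcompr2)
  then show "\<bar>snd z $ a $ b\<bar> \<le> supnorm z" unfolding supnorm_def by simp
qed

lemma supnorm_le:
  fixes z :: "(real^'n::finite^'k::finite) \<times> (real^'d::finite^'n)"
  assumes "\<And>i j. \<bar>fst z $ i $ j\<bar> \<le> M" "\<And>a b. \<bar>snd z $ a $ b\<bar> \<le> M"
  shows "supnorm z \<le> M"
  unfolding supnorm_def by (rule max.boundedI; rule Max_setcompr2_le) (use assms in auto)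

lemma scaled_abs_diff_le:
  fixes a b r c L g :: real
  assumes "0 < a" "0 < b" "a \<le> r" "b \<le> r" "\<bar>ln a - ln b\<bar> \<le> L" "c > 0" "c * r \<le> g"
  shows "c * \<bar>a - b\<bar> \<le> g * L"
proof -
  have "\<bar>a - b\<bar> \<le> r * \<bar>ln a - ln b\<bar>"
    using assms(1-4) by (rule abs_diff_le_mult_abs_ln_diff)
  also have "\<dots> \<le> r * L"
    using assms(1,3,5) by (intro mult_left_mono) auto
  finally have "\<bar>a - b\<bar> \<le> r * L" .
  then have "c * \<bar>a - b\<bar> \<le> (c * r) * L"
    using assms(6) by (simp add: mult.assoc)
  also have "\<dots> \<le> g * L"
    using assms(5,7) by (intro mult_right_mono) auto
  finally show ?thesis .
qed

lemma supnorm_le_mu_gamma: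
  fixes x y :: "(real^'n::finite^'k::finite) \<times> (real^'d::finite^'n)"
  assumes \<gamma>: "\<forall>r. \<gamma> $ r \<ge> 0" and xy: "x \<in> Spp pw pu rw ru" "y \<in> Spp pw pu rw ru"
    and p: "pw > 0" "pu > 0" and c: "c > 0" "c * ru \<le> \<gamma> $ None" "\<forall>i. c * rw \<le> \<gamma> $ Some i"
  shows "supnorm (x - y) \<le> mu_gamma \<gamma> x y / c"
proof -
  have "c * \<bar>fst x $ i $ j - fst y $ i $ j\<bar> \<le> \<gamma> $ Some i * ln_dist_w x y i" for i j
    using xy p c abs_le_vnorm[of pw "fst x $ i" j] abs_le_vnorm[of pw "fst y $ i" j]
    by (intro scaled_abs_diff_le[where r=rw] abs_ln_diff_le_ln_dist_w) (auto simp: Spp_iff)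
  then have "c * \<bar>fst x $ i $ j - fst y $ i $ j\<bar> \<le> mu_gamma \<gamma> x y" for i j
    using ln_dist_w_le_mu_gamma[OF \<gamma>] order_trans by blast
  moreover have "c * \<bar>snd x $ a $ b - snd y $ a $ b\<bar> \<le> \<gamma> $ None * ln_dist_u x y" for a b
    using xy p c abs_le_mnorm[of pu "snd x" a b] abs_le_mnorm[of pu "snd y" a b]
    by (intro scaled_abs_diff_le[where r=ru] abs_ln_diff_le_ln_dist_u) (auto simp: Spp_iff)
  then have "c * \<bar>snd x $ a $ b - snd y $ a $ b\<bar> \<le> mu_gamma \<gamma> x y" for a b
    using ln_dist_u_le_mu_gamma[OF \<gamma>] order_trans by blast
  ultimately show ?thesis
    using c(1) by (intro supnorm_le) (simp_all add: pos_le_divide_eq mult.commute)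
qed

lemma abs_sum_mult_le:
  fixes c d e :: "'j \<Rightarrow> real"
  assumes "\<And>j. j \<in> S \<Longrightarrow> \<bar>e j\<bar> \<le> M" "\<And>j. j \<in> S \<Longrightarrow> d j \<ge> 0"
  shows "\<bar>\<Sum>j\<in>S. c j * d j * e j\<bar> \<le> (\<Sum>j\<in>S. \<bar>c j\<bar> * d j) * M"
proof -
  have "\<bar>\<Sum>j\<in>S. c j * d j * e j\<bar> \<le> (\<Sum>j\<in>S. \<bar>c j\<bar> * d j * \<bar>e j\<bar>)"
    using sum_abs[of "\<lambda>j. c j * d j * e j" S] assms(2) by (simp add: abs_mult)
  also have "\<dots> \<le> (\<Sum>j\<in>S. \<bar>c j\<bar> * d j * M)"
    using assms by (intro sum_mono mult_left_mono) auto
  finally show ?thesis by (simp add: sum_distrib_right)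
qed

lemma derivative_log_segment_velocity_eq:
  fixes F :: "(real^'n::finite^'k::finite) \<times> (real^'d::finite^'n) \<Rightarrow> real"
    and x y :: "(real^'n^'k) \<times> (real^'d^'n)" and t :: real
  defines "g \<equiv> log_segment x y t"
  assumes D: "(F has_derivative D) (at g)"
  shows "D (log_segment_velocity x y t)
    = (\<Sum>i\<in>UNIV. \<Sum>j\<in>UNIV. dw F g i j * fst g $ i $ j * (ln (fst y $ i $ j) - ln (fst x $ i $ j)))
      + (\<Sum>a\<in>UNIV. \<Sum>b\<in>UNIV. du F g a b * snd g $ a $ b * (ln (snd y $ a $ b) - ln (snd x $ a $ b)))"
proof -
  have "fst (log_segment_velocity x y t) $ i $ j = fst g $ i $ j * (ln (fst y $ i $ j) - ln (fst x $ i $ j))"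
    "snd (log_segment_velocity x y t) $ a $ b = snd g $ a $ b * (ln (snd y $ a $ b) - ln (snd x $ a $ b))"
    for i j a b
    by (simp_all add: log_segment_velocity_def g_def)
  then show ?thesis
    using linear_apply_point[OF has_derivative_linear[OF D], of "fst (log_segment_velocity x y t)"
        "snd (log_segment_velocity x y t)"]
    by (simp add: dw_eq_derivative[OF D] du_eq_derivative[OF D] mult_ac)
qed

lemma derivative_log_segment_velocity_le:
  fixes F :: "(real^'n::finite^'k::finite) \<times> (real^'d::finite^'n) \<Rightarrow> real"
    and x y :: "(real^'n^'k) \<times> (real^'d^'n)" and t :: real
  defines "g \<equiv> log_segment x y t"
  assumes D: "(F has_derivative D) (at g)"
    and bw: "\<forall>k. (\<Sum>l\<in>UNIV. \<bar>dw F g k l\<bar> * fst g $ k $ l) \<le> \<alpha> k * F g"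
    and bu: "(\<Sum>a\<in>UNIV. \<Sum>b\<in>UNIV. \<bar>du F g a b\<bar> * snd g $ a $ b) \<le> \<beta> * F g"
  shows "\<bar>D (log_segment_velocity x y t)\<bar> \<le> ((\<Sum>k\<in>UNIV. \<alpha> k * ln_dist_w x y k) + \<beta> * ln_dist_u x y) * F g"
proof -
  let ?lw = "\<lambda>i j. ln (fst y $ i $ j) - ln (fst x $ i $ j)" and ?lu = "\<lambda>a b. ln (snd y $ a $ b) - ln (snd x $ a $ b)"
  have g_pos: "fst g $ i $ j \<ge> 0" "snd g $ a $ b \<ge> 0" for i j a b
    unfolding g_def log_segment_def by simp_all
  have "\<bar>\<Sum>j\<in>UNIV. dw F g i j * fst g $ i $ j * ?lw i j\<bar> \<le> (\<Sum>j\<in>UNIV. \<bar>dw F g i j\<bar> * fst g $ i $ j) * ln_dist_w x y i"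
    for i
    using g_pos abs_ln_diff_le_ln_dist_w[of y i _ x] by (intro abs_sum_mult_le) (auto simp: ln_dist_w_commute)
  also have "\<dots> i \<le> \<alpha> i * F g * ln_dist_w x y i" for i
    using bw by (intro mult_right_mono) (auto simp: ln_dist_w_nonneg)
  finally have bound_w: "\<bar>\<Sum>j\<in>UNIV. dw F g i j * fst g $ i $ j * ?lw i j\<bar> \<le> \<alpha> i * F g * ln_dist_w x y i" for i .
  have "\<bar>\<Sum>a\<in>UNIV. \<Sum>b\<in>UNIV. du F g a b * snd g $ a $ b * ?lu a b\<bar>
      \<le> (\<Sum>z\<in>UNIV. \<bar>du F g (fst z) (snd z)\<bar> * snd g $ fst z $ snd z) * ln_dist_u x y"
    using g_pos abs_ln_diff_le_ln_dist_u[of y _ _ x] abs_sum_mult_le[of UNIV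
        "\<lambda>z. ?lu (fst z) (snd z)" "ln_dist_u x y" "\<lambda>z. snd g $ fst z $ snd z" "\<lambda>z. du F g (fst z) (snd z)"]
    by (simp add: sum.cartesian_product case_prod_beta ln_dist_u_commute)
  also have "\<dots> \<le> \<beta> * F g * ln_dist_u x y"
    using bu by (intro mult_right_mono) (simp_all add: ln_dist_u_nonneg sum.cartesian_product case_prod_beta)
  finally have bound_u: "\<bar>\<Sum>a\<in>UNIV. \<Sum>b\<in>UNIV. du F g a b * snd g $ a $ b * ?lu a b\<bar> \<le> \<beta> * F g * ln_dist_u x y" .
  have "\<bar>D (log_segment_velocity x y t)\<bar>
      \<le> (\<Sum>i\<in>UNIV. \<bar>\<Sum>j\<in>UNIV. dw F g i j * fst g $ i $ j * ?lw i j\<bar>) + \<beta> * F g * ln_dist_u x y"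
    using derivative_log_segment_velocity_eq[OF D[unfolded g_def]] bound_u
      sum_abs[of "\<lambda>i. \<Sum>j\<in>UNIV. dw F g i j * fst g $ i $ j * ?lw i j" UNIV]
    unfolding g_def by linarith
  also have "\<dots> \<le> (\<Sum>i\<in>UNIV. \<alpha> i * F g * ln_dist_w x y i) + \<beta> * F g * ln_dist_u x y"
    using bound_w by (intro add_mono sum_mono) auto
  finally show ?thesis
    by (simp add: algebra_simps sum_distrib_left sum_distrib_right)
qed

text \<open>The mean value theorem along the log-linear segment from \<open>x\<close> to \<open>y\<close>: in logarithmic
  coordinates its velocity is \<open>ln y - ln x\<close>, so the weighted partial-derivative bounds on \<open>F\<close>
  become a Lipschitz bound for \<open>ln \<circ> F\<close> with respect to the log distances.\<close>

lemma abs_ln_diff_le_ln_dists: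
  fixes F :: "(real^'n::finite^'k::finite) \<times> (real^'d::finite^'n) \<Rightarrow> real"
  assumes x: "x \<in> Bpp pw pu rw ru" and y: "y \<in> Bpp pw pu rw ru" and p: "pw > 0" "pu > 0"
    and F: "\<forall>z\<in>Bpp pw pu rw ru. F differentiable (at z) \<and> F z > 0"
    and bw: "\<forall>z\<in>Bpp pw pu rw ru. \<forall>k. (\<Sum>l\<in>UNIV. \<bar>dw F z k l\<bar> * fst z $ k $ l) \<le> \<alpha> k * F z"
    and bu: "\<forall>z\<in>Bpp pw pu rw ru. (\<Sum>a\<in>UNIV. \<Sum>b\<in>UNIV. \<bar>du F z a b\<bar> * snd z $ a $ b) \<le> \<beta> * F z"
  shows "\<bar>ln (F y) - ln (F x)\<bar> \<le> (\<Sum>k\<in>UNIV. \<alpha> k * ln_dist_w x y k) + \<beta> * ln_dist_u x y"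
proof -
  define DF where "DF t = frechet_derivative F (at (log_segment x y t))" for t
  define h' where "h' t = DF t (log_segment_velocity x y t) / F (log_segment x y t)" for t
  have seg: "log_segment x y t \<in> Bpp pw pu rw ru" if "0 \<le> t" "t \<le> 1" for t
    using log_segment_in_Bpp[OF x y p that] .
  have DF: "(F has_derivative DF t) (at (log_segment x y t))" if "0 \<le> t" "t \<le> 1" for t
    unfolding DF_def using F seg[OF that] frechet_derivative_works by blast
  have "((\<lambda>t. ln (F (log_segment x y t))) has_real_derivative h' t) (at t)" if "0 \<le> t" "t \<le> 1" for t
  proof -
    have "((\<lambda>t. F (log_segment x y t)) has_derivative (\<lambda>s. DF t (s *\<^sub>R log_segment_velocity x y t))) (at t)"
      using has_derivative_compose[OF log_segment_has_derivative DF[OF that]] .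
    moreover have "(\<lambda>s. DF t (s *\<^sub>R log_segment_velocity x y t)) = (*) (DF t (log_segment_velocity x y t))"
      using has_derivative_linear[OF DF[OF that]] by (auto simp: linear_scale fun_eq_iff)
    ultimately have "((\<lambda>t. F (log_segment x y t)) has_real_derivative DF t (log_segment_velocity x y t)) (at t)"
      unfolding has_field_derivative_def by simp
    then show ?thesis
      unfolding h'_def using F seg[OF that]
      by (auto intro!: derivative_eq_intros simp: field_simps)
  qed
  then obtain z where z: "0 < z" "z < 1"
    and mvt: "ln (F (log_segment x y 1)) - ln (F (log_segment x y 0)) = (1 - 0) * h' z"
    using MVT2[of 0 1 "\<lambda>t. ln (F (log_segment x y t))" h'] by auto
  have "\<bar>DF z (log_segment_velocity x y z)\<bar>
      \<le> ((\<Sum>k\<in>UNIV. \<alpha> k * ln_dist_w x y k) + \<beta> * ln_dist_u x y) * F (log_segment x y z)"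
    using z bw bu seg[of z] by (intro derivative_log_segment_velocity_le DF) auto
  moreover have "log_segment x y 0 = x" "log_segment x y 1 = y"
    using x y log_segment_0 log_segment_1 by (auto simp: Bpp_def)
  moreover have "F (log_segment x y z) > 0" using F seg[of z] z by auto
  ultimately show ?thesis
    using mvt by (simp add: h'_def abs_divide pos_divide_le_eq)
qed

section \<open>Maximizers on the nonnegative sphere\<close>

text \<open>Pushing \<open>v + t h\<close> back onto the sphere of radius \<open>\<rho>\<close> does not change the velocity at
  \<open>t = 0\<close> when \<open>h\<close> is tangent, i.e.\ orthogonal to \<open>\<psi>\<^sub>p(v)\<close>, the gradient of
  \<open>\<parallel>\<cdot>\<parallel>\<^sub>p\<^sup>p / p\<close> at \<open>v\<close>.\<close>

lemma normalized_curve_has_derivative: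
  fixes v h :: "'j \<Rightarrow> real"
  assumes S: "finite S" and p: "p > 1" and \<rho>: "\<rho> > 0" and v: "lp_norm p S v = \<rho>"
    and tangent: "(\<Sum>l\<in>S. psi p (v l) * h l) = 0"
  shows "((\<lambda>t. \<rho> / lp_norm p S (\<lambda>l. v l + t * h l) * (v l + t * h l)) has_real_derivative h l) (at 0)"
proof -
  define Sm where "Sm t = (\<Sum>l\<in>S. \<bar>v l + t * h l\<bar> powr p)" for t
  have N: "lp_norm p S (\<lambda>l. v l + t * h l) = Sm t powr (1/p)" for t
    unfolding lp_norm_def Sm_def ..
  have Sm0: "Sm 0 > 0"
    using v \<rho> sum_nonneg[of S "\<lambda>l. \<bar>v l\<bar> powr p"] unfolding Sm_def lp_norm_def
    by (cases "Sm 0 = 0") (auto simp: Sm_def)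
  have dSm: "DERIV Sm 0 :> (\<Sum>l\<in>S. p * psi p (v l) * h l)"
    unfolding Sm_def
  proof (rule DERIV_sum)
    fix l
    have line: "((\<lambda>t. v l + t * h l) has_real_derivative h l) (at 0)"
      by (auto intro!: derivative_eq_intros)
    show "((\<lambda>t. \<bar>v l + t * h l\<bar> powr p) has_real_derivative p * psi p (v l) * h l) (at 0)"
      using DERIV_chain'[OF line, of "\<lambda>s. \<bar>s\<bar> powr p"] has_real_derivative_abs_powr[OF p, of "v l"] by simp
  qed
  have "(\<Sum>l\<in>S. p * psi p (v l) * h l) = 0"
    using tangent by (simp add: mult.assoc flip: sum_distrib_left)
  then have dSm0: "DERIV Sm 0 :> 0" using dSm by simp
  have "DERIV (\<lambda>t. lp_norm p S (\<lambda>l. v l + t * h l)) 0 :> 0"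
    unfolding N using DERIV_chain'[OF dSm0 has_real_derivative_powr[OF Sm0, of "1/p"]] by simp
  then have "DERIV (\<lambda>t. \<rho> / lp_norm p S (\<lambda>l. v l + t * h l) * (v l + t * h l)) 0
      :> (0 * \<rho> - \<rho> * 0) / (\<rho> * \<rho>) * (v l + 0 * h l) + h l * (\<rho> / \<rho>)"
    using v \<rho> by (auto intro!: derivative_eq_intros)
  then show ?thesis using \<rho> by simp
qed

lemma coordinate_curve_has_derivative:
  fixes \<Phi> :: "'x::real_normed_vector \<Rightarrow> real" and E :: "'j \<Rightarrow> 'x"
  assumes S: "finite S" and D: "(\<Phi> has_derivative D) (at y)" and g: "\<forall>l\<in>S. D (E l) = g l"
    and \<beta>: "\<forall>l\<in>S. (\<beta> l has_real_derivative h l) (at 0) \<and> \<beta> l 0 = v l"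
  shows "((\<lambda>t. \<Phi> (y + (\<Sum>l\<in>S. (\<beta> l t - v l) *\<^sub>R E l))) has_real_derivative (\<Sum>l\<in>S. g l * h l)) (at 0)"
proof -
  have "((\<lambda>t. (\<beta> l t - v l) *\<^sub>R E l) has_derivative (\<lambda>s. (s * h l) *\<^sub>R E l)) (at 0)" if "l \<in> S" for l
    using \<beta> that by (auto intro!: derivative_eq_intros simp: has_field_derivative_def mult.commute)
  then have "((\<lambda>t. \<Sum>l\<in>S. (\<beta> l t - v l) *\<^sub>R E l) has_derivative (\<lambda>s. \<Sum>l\<in>S. (s * h l) *\<^sub>R E l)) (at 0)"
    by (intro has_derivative_sum) auto
  from has_derivative_add[OF has_derivative_const[of y] this]
  have "((\<lambda>t. y + (\<Sum>l\<in>S. (\<beta> l t - v l) *\<^sub>R E l)) has_derivative (\<lambda>s. \<Sum>l\<in>S. (s * h l) *\<^sub>R E l)) (at 0)"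
    by simp
  moreover have "y + (\<Sum>l\<in>S. (\<beta> l 0 - v l) *\<^sub>R E l) = y"
    using \<beta> by simp
  ultimately have "((\<lambda>t. \<Phi> (y + (\<Sum>l\<in>S. (\<beta> l t - v l) *\<^sub>R E l))) has_derivative (\<lambda>s. D (\<Sum>l\<in>S. (s * h l) *\<^sub>R E l))) (at 0)"
    using has_derivative_compose D by fastforce
  moreover have "(\<lambda>s. D (\<Sum>l\<in>S. (s * h l) *\<^sub>R E l)) = (*) (\<Sum>l\<in>S. g l * h l)"
  proof
    fix s
    show "D (\<Sum>l\<in>S. (s * h l) *\<^sub>R E l) = (\<Sum>l\<in>S. g l * h l) * s"
      using has_derivative_linear[OF D] g
      by (simp add: linear_sum linear_scale sum_distrib_right mult_ac cong: sum.cong)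
  qed
  ultimately show ?thesis
    by (simp add: has_field_derivative_def)
qed

text \<open>The proof follows the curve \<open>\<rho> (v + t h) / \<parallel>v + t h\<parallel>\<^sub>p\<close>, which stays on the sphere
  and has velocity \<open>h\<close> at \<open>t = 0\<close>.\<close>

lemma sphere_max_first_order:
  fixes \<Phi> :: "'x::real_normed_vector \<Rightarrow> real" and E :: "'j \<Rightarrow> 'x" and v h g :: "'j \<Rightarrow> real"
  assumes S: "finite S" and p: "p > 1" and \<rho>: "\<rho> > 0" and v: "lp_norm p S v = \<rho>"
    and D: "(\<Phi> has_derivative D) (at y)" and g: "\<forall>l\<in>S. D (E l) = g l"
    and max: "\<forall>c. (\<forall>l\<in>S. c l \<ge> 0) \<and> lp_norm p S c = \<rho> \<longrightarrow> \<Phi> (y + (\<Sum>l\<in>S. (c l - v l) *\<^sub>R E l)) \<le> \<Phi> y"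
    and tangent: "(\<Sum>l\<in>S. psi p (v l) * h l) = 0"
    and \<delta>: "\<delta> > 0"
    and admissible: "\<forall>t. 0 < t \<and> t < \<delta> \<longrightarrow> (\<forall>l\<in>S. v l + t * h l \<ge> 0) \<and> (\<exists>l\<in>S. v l + t * h l > 0)"
  shows "(\<Sum>l\<in>S. g l * h l) \<le> 0"
proof (rule ccontr)
  define \<beta> where "\<beta> l t = \<rho> / lp_norm p S (\<lambda>l. v l + t * h l) * (v l + t * h l)" for l t
  define \<phi> where "\<phi> t = \<Phi> (y + (\<Sum>l\<in>S. (\<beta> l t - v l) *\<^sub>R E l))" for t
  have \<beta>0: "\<beta> l 0 = v l" for l unfolding \<beta>_def using v \<rho> by simp
  then have d\<phi>: "DERIV \<phi> 0 :> (\<Sum>l\<in>S. g l * h l)"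
    unfolding \<phi>_def using normalized_curve_has_derivative[OF S p \<rho> v tangent]
    by (intro coordinate_curve_has_derivative[OF S D g]) (simp add: \<beta>_def)
  assume "\<not> (\<Sum>l\<in>S. g l * h l) \<le> 0"
  then obtain d where d: "d > 0" "\<forall>\<tau>>0. \<tau> < d \<longrightarrow> \<phi> 0 < \<phi> (0 + \<tau>)"
    using DERIV_pos_inc_right[OF d\<phi>] by force
  define \<tau> where "\<tau> = min d \<delta> / 2"
  have \<tau>: "\<tau> > 0" "\<tau> < d" "\<tau> < \<delta>" unfolding \<tau>_def using d \<delta> by auto
  then obtain l0 where l0: "l0 \<in> S" "v l0 + \<tau> * h l0 > 0" and nonneg: "\<forall>l\<in>S. v l + \<tau> * h l \<ge> 0"
    using admissible by blast
  have N: "lp_norm p S (\<lambda>l. v l + \<tau> * h l) > 0"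
    using lp_norm_pos[OF S l0(1)] l0(2) p by simp
  have "lp_norm p S (\<lambda>l. \<beta> l \<tau>) = \<rho>"
    using N \<rho> p lp_norm_scale[of "\<rho> / lp_norm p S (\<lambda>l. v l + \<tau> * h l)" p S "\<lambda>l. v l + \<tau> * h l"]
    unfolding \<beta>_def by simp
  moreover have "\<forall>l\<in>S. \<beta> l \<tau> \<ge> 0"
    using nonneg N \<rho> unfolding \<beta>_def by simp
  ultimately have "\<phi> \<tau> \<le> \<Phi> y"
    unfolding \<phi>_def using max[rule_format, of "\<lambda>l. \<beta> l \<tau>"] by blast
  moreover have "\<phi> 0 = \<Phi> y" unfolding \<phi>_def using \<beta>0 by simp
  moreover have "\<phi> 0 < \<phi> (0 + \<tau>)" using d(2) \<tau>(1,2) by blast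
  ultimately show False by simp
qed

lemma sphere_max_pos:
  fixes \<Phi> :: "'x::real_normed_vector \<Rightarrow> real" and E :: "'j \<Rightarrow> 'x" and v g :: "'j \<Rightarrow> real"
  assumes S: "finite S" and p: "p > 1" and \<rho>: "\<rho> > 0" and v: "lp_norm p S v = \<rho>" "\<forall>l\<in>S. v l \<ge> 0"
    and D: "(\<Phi> has_derivative D) (at y)" and g: "\<forall>l\<in>S. D (E l) = g l" "\<forall>l\<in>S. g l > 0"
    and max: "\<forall>c. (\<forall>l\<in>S. c l \<ge> 0) \<and> lp_norm p S c = \<rho> \<longrightarrow> \<Phi> (y + (\<Sum>l\<in>S. (c l - v l) *\<^sub>R E l)) \<le> \<Phi> y"
  shows "\<forall>l\<in>S. v l > 0"
proof (rule ballI, rule ccontr)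
  fix b assume b: "b \<in> S" "\<not> v b > 0"
  then have vb: "v b = 0" using v(2) by force
  let ?h = "\<lambda>l. if l = b then 1 else (0::real)"
  have "(\<Sum>l\<in>S. g l * ?h l) \<le> 0"
  proof (rule sphere_max_first_order[OF S p \<rho> v(1) D g(1) max])
    show "(\<Sum>l\<in>S. psi p (v l) * ?h l) = 0"
      using sum_delta_mult[OF S b(1), of "\<lambda>l. psi p (v l)" 1] vb by (simp add: psi_def)
    show "\<forall>t. 0 < t \<and> t < 1 \<longrightarrow> (\<forall>l\<in>S. v l + t * ?h l \<ge> 0) \<and> (\<exists>l\<in>S. v l + t * ?h l > 0)"
      using v(2) b(1) vb by auto
  qed simp
  then show False using sum_delta_mult[OF S b(1), of g 1] g(2) b(1) by auto
qed

text \<open>Comparing the two coordinates \<open>a\<close> and \<open>b\<close> along the tangent direction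
  \<open>\<psi>\<^sub>p(v\<^sub>b) e\<^sub>a - \<psi>\<^sub>p(v\<^sub>a) e\<^sub>b\<close> shows that \<open>g\<^sub>a / \<psi>\<^sub>p(v\<^sub>a)\<close> does not depend
  on \<open>a\<close>; this common value is the Lagrange multiplier.\<close>

lemma sphere_max_exchange:
  fixes \<Phi> :: "'x::real_normed_vector \<Rightarrow> real" and E :: "'j \<Rightarrow> 'x" and v g :: "'j \<Rightarrow> real"
  assumes S: "finite S" and p: "p > 1" and \<rho>: "\<rho> > 0" and v: "lp_norm p S v = \<rho>" "\<forall>l\<in>S. v l > 0"
    and D: "(\<Phi> has_derivative D) (at y)" and g: "\<forall>l\<in>S. D (E l) = g l"
    and max: "\<forall>c. (\<forall>l\<in>S. c l \<ge> 0) \<and> lp_norm p S c = \<rho> \<longrightarrow> \<Phi> (y + (\<Sum>l\<in>S. (c l - v l) *\<^sub>R E l)) \<le> \<Phi> y"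
    and ab: "a \<in> S" "b \<in> S" "a \<noteq> b"
  shows "g a * psi p (v b) \<le> g b * psi p (v a)"
proof -
  let ?\<psi> = "\<lambda>l. psi p (v l)"
  let ?h = "\<lambda>l. (if l = a then ?\<psi> b else 0) - (if l = b then ?\<psi> a else 0)"
  have \<psi>: "?\<psi> a > 0" "?\<psi> b > 0" using v(2) ab psi_pos by blast+
  have pair: "(\<Sum>l\<in>S. f l * ?h l) = f a * ?\<psi> b - f b * ?\<psi> a" for f
    using sum_delta_mult[OF S ab(1)] sum_delta_mult[OF S ab(2)]
    by (simp add: right_diff_distrib sum_subtractf)
  have "(\<Sum>l\<in>S. g l * ?h l) \<le> 0"
  proof (rule sphere_max_first_order[OF S p \<rho> v(1) D g max])
    show "(\<Sum>l\<in>S. ?\<psi> l * ?h l) = 0" using pair[of ?\<psi>] by simp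
    show "v b / ?\<psi> a > 0" using v(2) \<psi> ab by auto
    show "\<forall>t. 0 < t \<and> t < v b / ?\<psi> a \<longrightarrow>
        (\<forall>l\<in>S. v l + t * ?h l \<ge> 0) \<and> (\<exists>l\<in>S. v l + t * ?h l > 0)"
    proof (intro allI impI conjI)
      fix t assume t: "0 < t \<and> t < v b / ?\<psi> a"
      then have "t * ?\<psi> a < v b" using \<psi> by (simp add: less_divide_eq)
      then show "\<forall>l\<in>S. v l + t * ?h l \<ge> 0"
        using v(2) \<psi> ab t by (auto simp: less_imp_le add_nonneg_nonneg)
      show "\<exists>l\<in>S. v l + t * ?h l > 0"
        using ab v(2) \<psi> t by (intro bexI[of _ a]) (auto simp: add_pos_pos)
    qed
  qed
  then show ?thesis using pair[of g] by simp
qed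

lemma sphere_max_lagrange:
  fixes \<Phi> :: "'x::real_normed_vector \<Rightarrow> real" and E :: "'j \<Rightarrow> 'x" and v g :: "'j \<Rightarrow> real"
  assumes S: "finite S" "S \<noteq> {}" and p: "p > 1" and \<rho>: "\<rho> > 0"
    and v: "lp_norm p S v = \<rho>" "\<forall>l\<in>S. v l \<ge> 0"
    and D: "(\<Phi> has_derivative D) (at y)" and g: "\<forall>l\<in>S. D (E l) = g l" "\<forall>l\<in>S. g l > 0"
    and max: "\<forall>c. (\<forall>l\<in>S. c l \<ge> 0) \<and> lp_norm p S c = \<rho> \<longrightarrow> \<Phi> (y + (\<Sum>l\<in>S. (c l - v l) *\<^sub>R E l)) \<le> \<Phi> y"
  shows "(\<forall>l\<in>S. v l > 0) \<and> (\<exists>lam. \<forall>l\<in>S. g l = lam * psi p (v l))"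
proof -
  have vpos: "\<forall>l\<in>S. v l > 0" using sphere_max_pos[OF S(1) p \<rho> v D g max] .
  note exchange = sphere_max_exchange[OF S(1) p \<rho> v(1) vpos D g(1) max]
  obtain l0 where l0: "l0 \<in> S" using S(2) by blast
  have \<psi>0: "psi p (v l0) > 0" using vpos l0 psi_pos by blast
  have "g l = (g l0 / psi p (v l0)) * psi p (v l)" if "l \<in> S" for l
  proof (cases "l = l0")
    case False
    then have "g l * psi p (v l0) = g l0 * psi p (v l)" using exchange[OF that l0] exchange[OF l0 that] by simp
    then show ?thesis using \<psi>0 by (simp add: field_simps)
  qed (use \<psi>0 in simp)
  then show ?thesis using vpos by blast
qed

lemma add_sum_unit_w:
  fixes y :: "(real^'n::finite^'k::finite) \<times> (real^'d::finite^'n)" and c :: "'n \<Rightarrow> real"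
  shows "y + (\<Sum>l\<in>UNIV. (c l - fst y $ i $ l) *\<^sub>R unit_w i l)
    = ((\<chi> k. if k = i then (\<chi> l. c l) else fst y $ k), snd y)"
proof -
  have "(fst y + (\<Sum>l\<in>UNIV. (c l - fst y $ i $ l) *\<^sub>R (axis i (axis l 1) :: real^'n^'k))) $ k $ j
      = (if k = i then c j else fst y $ k $ j)" for k j
  proof -
    have "(fst y + (\<Sum>l\<in>UNIV. (c l - fst y $ i $ l) *\<^sub>R (axis i (axis l 1) :: real^'n^'k))) $ k $ j
        = fst y $ k $ j + (\<Sum>l\<in>UNIV. (c l - fst y $ i $ l) * (if i = k then if l = j then 1 else 0 else 0))"
      by (simp add: sum_component axis_axis_nth)
    also have "\<dots> = (if k = i then c j else fst y $ k $ j)"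
      by (cases "k = i") (simp_all add: sum_delta_mult)
    finally show ?thesis .
  qed
  then show ?thesis
    by (simp add: prod_eq_iff fst_sum snd_sum unit_w_def vec_eq_iff del: vector_add_component)
qed

lemma add_sum_unit_u:
  fixes y :: "(real^'n::finite^'k::finite) \<times> (real^'d::finite^'n)" and c :: "'n \<times> 'd \<Rightarrow> real"
  shows "y + (\<Sum>z\<in>UNIV. (c z - snd y $ fst z $ snd z) *\<^sub>R unit_u (fst z) (snd z)) = (fst y, (\<chi> a b. c (a, b)))"
proof -
  have "(snd y + (\<Sum>z\<in>UNIV. (c z - snd y $ fst z $ snd z) *\<^sub>R (axis (fst z) (axis (snd z) 1) :: real^'d^'n))) $ a $ b
      = c (a, b)" for a b
  proof -
    have "(\<Sum>z\<in>UNIV. (c z - snd y $ fst z $ snd z) * (if fst z = a then if snd z = b then 1 else 0 else 0))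
        = (\<Sum>z\<in>UNIV. (c z - snd y $ fst z $ snd z) * (if z = (a, b) then 1 else 0))"
      by (rule sum.cong) (auto simp: prod_eq_iff)
    then show ?thesis
      using sum_delta_mult[of UNIV "(a, b)" "\<lambda>z. c z - snd y $ fst z $ snd z" 1]
      by (simp add: sum_component axis_axis_nth)
  qed
  then show ?thesis
    by (simp add: prod_eq_iff fst_sum snd_sum unit_u_def vec_eq_iff del: vector_add_component)
qed

lemma Splus_max_row_lagrange:
  fixes y :: "(real^'n::finite^'k::finite) \<times> (real^'d::finite^'n)"
  assumes pw: "pw > 1" and rw: "rw > 0" and y: "y \<in> Splus pw pu rw ru"
    and max: "\<forall>z\<in>Splus pw pu rw ru. \<Phi> z \<le> \<Phi> y"
    and D: "(\<Phi> has_derivative D) (at y)" and g: "\<forall>j. dw \<Phi> y i j > 0"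
  shows "(\<forall>j. fst y $ i $ j > 0) \<and> (\<exists>lam. \<forall>j. dw \<Phi> y i j = lam * psi pw (fst y $ i $ j))"
proof -
  have yw: "\<forall>k. vnorm pw (fst y $ k) = rw" "\<forall>k j. fst y $ k $ j \<ge> 0" "mnorm pu (snd y) = ru"
    "\<forall>a b. snd y $ a $ b \<ge> 0"
    using y by (auto simp: Splus_def)
  have "(\<forall>j\<in>UNIV. fst y $ i $ j > 0) \<and> (\<exists>lam. \<forall>j\<in>UNIV. dw \<Phi> y i j = lam * psi pw (fst y $ i $ j))"
  proof (rule sphere_max_lagrange[where E="unit_w i" and D=D])
    show "lp_norm pw UNIV (\<lambda>j. fst y $ i $ j) = rw" using yw(1) by (simp add: vnorm_eq_lp_norm)
    show "\<forall>j\<in>UNIV. D (unit_w i j) = dw \<Phi> y i j" using dw_eq_derivative[OF D] by simp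
    show "\<forall>c. (\<forall>j\<in>UNIV. c j \<ge> 0) \<and> lp_norm pw UNIV c = rw \<longrightarrow>
        \<Phi> (y + (\<Sum>j\<in>UNIV. (c j - fst y $ i $ j) *\<^sub>R unit_w i j)) \<le> \<Phi> y"
    proof (intro allI impI)
      fix c :: "'n \<Rightarrow> real" assume c: "(\<forall>j\<in>UNIV. c j \<ge> 0) \<and> lp_norm pw UNIV c = rw"
      then have "vnorm pw (\<chi> j. c j) = rw" by (simp add: vnorm_eq_lp_norm)
      then have "((\<chi> k. if k = i then (\<chi> j. c j) else fst y $ k), snd y) \<in> Splus pw pu rw ru"
        using c yw unfolding Splus_def by simp
      then show "\<Phi> (y + (\<Sum>j\<in>UNIV. (c j - fst y $ i $ j) *\<^sub>R unit_w i j)) \<le> \<Phi> y"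
        using max by (simp add: add_sum_unit_w)
    qed
  qed (use pw rw yw(2) g D in simp_all)
  then show ?thesis by simp
qed

lemma Splus_max_u_lagrange:
  fixes y :: "(real^'n::finite^'k::finite) \<times> (real^'d::finite^'n)"
  assumes pu: "pu > 1" and ru: "ru > 0" and y: "y \<in> Splus pw pu rw ru"
    and max: "\<forall>z\<in>Splus pw pu rw ru. \<Phi> z \<le> \<Phi> y"
    and D: "(\<Phi> has_derivative D) (at y)" and g: "\<forall>a b. du \<Phi> y a b > 0"
  shows "(\<forall>a b. snd y $ a $ b > 0) \<and> (\<exists>lam. \<forall>a b. du \<Phi> y a b = lam * psi pu (snd y $ a $ b))"
proof -
  have yu: "mnorm pu (snd y) = ru" "\<forall>a b. snd y $ a $ b \<ge> 0" "\<forall>i j. fst y $ i $ j \<ge> 0"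
    "\<forall>i. vnorm pw (fst y $ i) = rw"
    using y by (auto simp: Splus_def)
  have "(\<forall>z\<in>UNIV. snd y $ fst z $ snd z > 0)
      \<and> (\<exists>lam. \<forall>z\<in>UNIV. du \<Phi> y (fst z) (snd z) = lam * psi pu (snd y $ fst z $ snd z))"
  proof (rule sphere_max_lagrange[where E="\<lambda>z. unit_u (fst z) (snd z)" and D=D])
    show "lp_norm pu UNIV (\<lambda>z. snd y $ fst z $ snd z) = ru" using yu(1) by (simp add: mnorm_eq_lp_norm)
    show "\<forall>z\<in>UNIV. D (unit_u (fst z) (snd z)) = du \<Phi> y (fst z) (snd z)" using du_eq_derivative[OF D] by simp
    show "\<forall>c. (\<forall>z\<in>UNIV. c z \<ge> 0) \<and> lp_norm pu UNIV c = ru \<longrightarrow>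
        \<Phi> (y + (\<Sum>z\<in>UNIV. (c z - snd y $ fst z $ snd z) *\<^sub>R unit_u (fst z) (snd z))) \<le> \<Phi> y"
    proof (intro allI impI)
      fix c :: "'n \<times> 'd \<Rightarrow> real" assume c: "(\<forall>z\<in>UNIV. c z \<ge> 0) \<and> lp_norm pu UNIV c = ru"
      then have "mnorm pu (\<chi> a b. c (a, b)) = ru" by (simp add: mnorm_eq_lp_norm)
      then have "(fst y, (\<chi> a b. c (a, b))) \<in> Splus pw pu rw ru"
        using c yu unfolding Splus_def by simp
      then show "\<Phi> (y + (\<Sum>z\<in>UNIV. (c z - snd y $ fst z $ snd z) *\<^sub>R unit_u (fst z) (snd z))) \<le> \<Phi> y"
        using max by (simp add: add_sum_unit_u)
    qed
  qed (use pu ru yu(2) g D in simp_all)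
  then show ?thesis by simp
qed

lemma Splus_max_imp_crit:
  assumes "pw > 1" "pu > 1" "rw > 0" "ru > 0" and y: "y \<in> Splus pw pu rw ru"
    and max: "\<forall>z\<in>Splus pw pu rw ru. \<Phi> z \<le> \<Phi> y" and D: "\<Phi> differentiable (at y)"
    and g: "\<forall>i j. dw \<Phi> y i j > 0" "\<forall>a b. du \<Phi> y a b > 0"
  shows "y \<in> Spp pw pu rw ru \<and> is_crit pw pu \<Phi> y"
proof -
  obtain D where D: "(\<Phi> has_derivative D) (at y)" using D unfolding differentiable_def by blast
  have "\<forall>i. (\<forall>j. fst y $ i $ j > 0) \<and> (\<exists>lam. \<forall>j. dw \<Phi> y i j = lam * psi pw (fst y $ i $ j))"
    using Splus_max_row_lagrange[OF assms(1,3) y max D] g(1) by blast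
  then obtain lam where "\<forall>i j. fst y $ i $ j > 0" "\<forall>i j. dw \<Phi> y i j = lam i * psi pw (fst y $ i $ j)"
    by (metis (no_types))
  moreover obtain lamu where "\<forall>a b. snd y $ a $ b > 0" "\<forall>a b. du \<Phi> y a b = lamu * psi pu (snd y $ a $ b)"
    using Splus_max_u_lagrange[OF assms(2,4) y max D g(2)] by blast
  ultimately show ?thesis
    using y unfolding is_crit_def by (auto simp: Spp_def Splus_def Vpp_def)
qed

lemma closed_Splus:
  assumes "pw > 0" "pu > 0"
  shows "closed (Splus pw pu rw ru :: ((real^'n::finite^'k::finite) \<times> (real^'d::finite^'n)) set)"
proof -
  have "Splus pw pu rw ru = {x::(real^'n^'k) \<times> (real^'d^'n). (\<forall>i j. 0 \<le> fst x $ i $ j)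
      \<and> (\<forall>a b. 0 \<le> snd x $ a $ b) \<and> mnorm pu (snd x) = ru \<and> (\<forall>i. vnorm pw (fst x $ i) = rw)}"
    unfolding Splus_def by auto
  moreover have "continuous_on UNIV (\<lambda>x::(real^'n^'k) \<times> (real^'d^'n). vnorm pw (fst x $ i))" for i
    unfolding vnorm_def using assms by (intro continuous_on_powr' continuous_intros) (auto intro: sum_nonneg)
  moreover have "continuous_on UNIV (\<lambda>x::(real^'n^'k) \<times> (real^'d^'n). mnorm pu (snd x))"
    unfolding mnorm_def using assms by (intro continuous_on_powr' continuous_intros) (auto intro!: sum_nonneg)
  ultimately show ?thesis
    by (simp only:) (intro closed_Collect_conj closed_Collect_all closed_Collect_le closed_Collect_eq
        continuous_intros; assumption)
qed

lemma norm_le_card_mult_max_entry: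
  fixes w :: "real^'n::finite^'k::finite"
  assumes "\<forall>i j. \<bar>w $ i $ j\<bar> \<le> r"
  shows "norm w \<le> real CARD('k) * (real CARD('n) * r)"
proof -
  have "norm w \<le> (\<Sum>i\<in>UNIV. norm (w $ i))" unfolding norm_vec_def by (rule L2_set_le_sum) simp
  also have "\<dots> \<le> (\<Sum>i\<in>UNIV. \<Sum>j\<in>UNIV. \<bar>w $ i $ j\<bar>)" by (intro sum_mono norm_le_l1_cart)
  also have "\<dots> \<le> (\<Sum>i\<in>(UNIV::'k set). \<Sum>j\<in>(UNIV::'n set). r)" using assms by (intro sum_mono) auto
  finally show ?thesis by simp
qed

lemma bounded_Splus:
  assumes "pw > 0" "pu > 0"
  shows "bounded (Splus pw pu rw ru :: ((real^'n::finite^'k::finite) \<times> (real^'d::finite^'n)) set)"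
proof -
  let ?W = "{w::real^'n^'k. \<forall>i j. \<bar>w $ i $ j\<bar> \<le> rw}" and ?U = "{u::real^'d^'n. \<forall>a b. \<bar>u $ a $ b\<bar> \<le> ru}"
  have sub: "Splus pw pu rw ru \<subseteq> ?W \<times> ?U"
  proof
    fix x :: "(real^'n^'k) \<times> (real^'d^'n)" assume "x \<in> Splus pw pu rw ru"
    then have "\<bar>fst x $ i $ j\<bar> \<le> rw" "\<bar>snd x $ a $ b\<bar> \<le> ru" for i j a b
      using assms abs_le_vnorm[of pw "fst x $ i" j] abs_le_mnorm[of pu "snd x" a b] by (auto simp: Splus_def)
    then show "x \<in> ?W \<times> ?U" by (simp add: mem_Times_iff)
  qed
  have bW: "bounded ?W"
    unfolding bounded_iff by (rule exI[of _ "real CARD('k) * (real CARD('n) * rw)"])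
      (auto intro: norm_le_card_mult_max_entry)
  have bU: "bounded ?U"
    unfolding bounded_iff by (rule exI[of _ "real CARD('n) * (real CARD('d) * ru)"])
      (auto intro: norm_le_card_mult_max_entry)
  show ?thesis
    by (rule bounded_subset[OF bounded_Times[OF bW bU] sub])
qed

lemma Spp_nonempty:
  assumes "pw > 0" "pu > 0" "rw > 0" "ru > 0"
  shows "(Spp pw pu rw ru :: ((real^'n::finite^'k::finite) \<times> (real^'d::finite^'n)) set) \<noteq> {}"
proof -
  define cw where "cw = rw / real CARD('n) powr (1/pw)"
  define cu where "cu = ru / real (CARD('n) * CARD('d)) powr (1/pu)"
  have cw: "cw > 0" and cu: "cu > 0" unfolding cw_def cu_def using assms by simp_all
  have "vnorm pw (\<chi> j. cw :: real^'n) = rw"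
  proof -
    have "vnorm pw (\<chi> j. cw :: real^'n) = (real CARD('n) * cw powr pw) powr (1/pw)"
      unfolding vnorm_def using cw by simp
    also have "\<dots> = rw" unfolding cw_def using cw assms by (simp add: powr_mult powr_powr)
    finally show ?thesis .
  qed
  moreover have "mnorm pu (\<chi> a b. cu :: real^'d^'n) = ru"
  proof -
    have "mnorm pu (\<chi> a b. cu :: real^'d^'n) = (real (CARD('n) * CARD('d)) * cu powr pu) powr (1/pu)"
      unfolding mnorm_def using cu by (simp add: mult.assoc)
    also have "\<dots> = ru" unfolding cu_def using cu assms by (simp add: powr_mult powr_powr del: of_nat_mult)
    finally show ?thesis .
  qed
  ultimately have "((\<chi> i j. cw), (\<chi> a b. cu)) \<in> (Spp pw pu rw ru :: ((real^'n^'k) \<times> (real^'d^'n)) set)"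
    using cw cu by (simp add: Spp_iff)
  then show ?thesis by blast
qed

section \<open>The contraction argument\<close>

lemma convergent_if_geometric_tail:
  fixes l :: "nat \<Rightarrow> real"
  assumes b: "\<And>k m. k \<le> m \<Longrightarrow> \<bar>l k - l m\<bar> \<le> \<theta> ^ k * D" and \<theta>: "0 \<le> \<theta>" "\<theta> < 1"
  shows "convergent l"
proof -
  have "(\<lambda>k. \<theta> ^ k * D) \<longlonglongrightarrow> 0"
    using LIMSEQ_power_zero[of \<theta>] \<theta> by (auto intro: tendsto_mult_left_zero)
  have "Cauchy l"
  proof (rule metric_CauchyI)
    fix e :: real assume "e > 0"
    with \<open>(\<lambda>k. \<theta> ^ k * D) \<longlonglongrightarrow> 0\<close> obtain N where N: "\<forall>k\<ge>N. \<theta> ^ k * D < e"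
      unfolding LIMSEQ_def dist_real_def by (metis abs_less_iff diff_zero)
    have "dist (l m) (l n) < e" if "m \<ge> N" "n \<ge> N" for m n
      using b[of m n] b[of n m] N that by (cases "m \<le> n") (auto simp: dist_real_def abs_minus_commute)
    then show "\<exists>M. \<forall>m\<ge>M. \<forall>n\<ge>M. dist (l m) (l n) < e" by blast
  qed
  then show ?thesis by (simp add: Cauchy_convergent_iff)
qed

lemma geometric_tail_bound:
  fixes d :: "'a \<Rightarrow> 'a \<Rightarrow> real" and x :: "nat \<Rightarrow> 'a"
  assumes triangle: "\<And>a b c. d a c \<le> d a b + d b c" and self: "\<And>a. d a a = 0"
    and step: "\<And>k. d (x k) (x (Suc k)) \<le> \<theta> ^ k * M" and \<theta>: "0 \<le> \<theta>" "\<theta> < 1" and M: "M \<ge> 0"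
    and "k \<le> m"
  shows "d (x k) (x m) \<le> \<theta> ^ k * M / (1 - \<theta>)"
proof -
  have "d (x k) (x (k + n)) \<le> (\<Sum>t<n. \<theta> ^ (k + t) * M)" for n
  proof (induction n)
    case (Suc n)
    have "d (x k) (x (k + Suc n)) \<le> d (x k) (x (k + n)) + d (x (k + n)) (x (Suc (k + n)))"
      using triangle by simp
    then show ?case using Suc step[of "k + n"] by simp
  qed (simp add: self)
  also have "(\<Sum>t<n. \<theta> ^ (k + t) * M) = \<theta> ^ k * M * (1 - \<theta> ^ n) / (1 - \<theta>)" for n
    using \<theta> by (simp add: power_add sum_gp_strict mult_ac flip: sum_distrib_left sum_distrib_right)
  also have "\<dots> n \<le> \<theta> ^ k * M / (1 - \<theta>)" for n
    using \<theta> M by (intro divide_right_mono mult_left_le) auto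
  finally show ?thesis
    using \<open>k \<le> m\<close> by (metis le_add_diff_inverse)
qed

lemma geometric_error_mono:
  fixes \<theta> \<rho> M c :: real
  assumes "0 \<le> \<theta>" "\<theta> \<le> \<rho>" "\<rho> < 1" "M \<ge> 0" "c > 0"
  shows "\<theta> ^ k * M / ((1 - \<theta>) * c) \<le> \<rho> ^ k * M / ((1 - \<rho>) * c)"
  using assms
  by (intro frac_le mult_right_mono mult_pos_pos power_mono mult_left_mono) (auto intro!: mult_nonneg_nonneg)

text \<open>The hypothesis \<open>\<rho>(A) < 1\<close> is only used through the eigenvalue \<open>\<theta>\<close> of the positive
  left eigenvector \<open>\<gamma>\<close>, which satisfies \<open>0 \<le> \<theta> \<le> \<rho>(A)\<close>.\<close>

locale GPhi_contraction =
  fixes \<Phi> :: "(real^'n::finite^'k::finite) \<times> (real^'d::finite^'n) \<Rightarrow> real"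
    and pw pu rw ru :: real
    and A :: "real^('k option)^('k option)"
    and \<gamma> :: "real^('k option)"
    and \<theta> :: real
  assumes pw: "pw > 1" and pu: "pu > 1" and rw: "rw > 0" and ru: "ru > 0"
    and C1: "C1_on UNIV \<Phi>"
    and C2: "\<exists>U. open U \<and> Bpp pw pu rw ru \<subseteq> U \<and> C2_on U \<Phi>"
    and grad_pos: "\<forall>x \<in> Splus pw pu rw ru \<union> Bpp pw pu rw ru.
                     (\<forall>i j. dw \<Phi> x i j > 0) \<and> (\<forall>a b. du \<Phi> x a b > 0)"
    and H1: "\<forall>x\<in>Bpp pw pu rw ru. \<forall>i k j.
        (\<Sum>l\<in>UNIV. \<bar>dw (\<lambda>y. fst (GPhi pw pu rw ru \<Phi> y) $ i $ j) x k l\<bar> * fst x $ k $ l)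
          \<le> A$(Some i)$(Some k) * fst (GPhi pw pu rw ru \<Phi> x) $ i $ j"
    and H2: "\<forall>x\<in>Bpp pw pu rw ru. \<forall>i j.
        (\<Sum>a\<in>UNIV. \<Sum>b\<in>UNIV. \<bar>du (\<lambda>y. fst (GPhi pw pu rw ru \<Phi> y) $ i $ j) x a b\<bar> * snd x $ a $ b)
          \<le> A$(Some i)$None * fst (GPhi pw pu rw ru \<Phi> x) $ i $ j"
    and H3: "\<forall>x\<in>Bpp pw pu rw ru. \<forall>k a b.
        (\<Sum>l\<in>UNIV. \<bar>dw (\<lambda>y. snd (GPhi pw pu rw ru \<Phi> y) $ a $ b) x k l\<bar> * fst x $ k $ l)
          \<le> A$None$(Some k) * snd (GPhi pw pu rw ru \<Phi> x) $ a $ b"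
    and H4: "\<forall>x\<in>Bpp pw pu rw ru. \<forall>a b.
        (\<Sum>a'\<in>UNIV. \<Sum>b'\<in>UNIV. \<bar>du (\<lambda>y. snd (GPhi pw pu rw ru \<Phi> y) $ a $ b) x a' b'\<bar> * snd x $ a' $ b')
          \<le> A$None$None * snd (GPhi pw pu rw ru \<Phi> x) $ a $ b"
    and gamma_pos: "\<forall>r. \<gamma>$r > 0"
    and gamma_eig: "\<forall>s. (\<Sum>r\<in>UNIV. A$r$s * \<gamma>$r) = \<theta> * \<gamma>$s"
    and theta: "0 \<le> \<theta>" "\<theta> < 1"
begin

abbreviation "G \<equiv> GPhi pw pu rw ru \<Phi>"

lemma gamma_nonneg: "\<forall>r. \<gamma> $ r \<ge> 0"
  using gamma_pos less_imp_le by blast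

lemma G_in_Spp: "x \<in> Bpp pw pu rw ru \<Longrightarrow> G x \<in> Spp pw pu rw ru"
  using GPhi_in_Spp[OF pw pu rw ru] grad_pos by blast

lemma G_components_differentiable:
  assumes "x \<in> Bpp pw pu rw ru"
  shows "(\<lambda>y. fst (G y) $ i $ j) differentiable (at x)" "(\<lambda>y. snd (G y) $ a $ b) differentiable (at x)"
proof -
  obtain U where U: "open U" "x \<in> U" "C2_on U \<Phi>" using C2 assms by blast
  show "(\<lambda>y. fst (G y) $ i $ j) differentiable (at x)"
    unfolding GPhi_fst_eq using assms grad_pos pw partial_derivatives_differentiable(1)[OF U]
    by (intro differentiable_normalized_psi[where g="\<lambda>l y. dw \<Phi> y i l"]) auto
  have "(\<lambda>y. ru / lp_norm pu UNIV (\<lambda>z. psi (conj_exp pu) (du \<Phi> y (fst z) (snd z)))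
      * psi (conj_exp pu) (du \<Phi> y (fst (a, b)) (snd (a, b)))) differentiable (at x)"
    using assms grad_pos pu partial_derivatives_differentiable(2)[OF U]
    by (intro differentiable_normalized_psi[where g="\<lambda>z y. du \<Phi> y (fst z) (snd z)"]) auto
  then show "(\<lambda>y. snd (G y) $ a $ b) differentiable (at x)"
    unfolding GPhi_snd_eq by simp
qed

lemma ln_dist_G_le:
  assumes "x \<in> Bpp pw pu rw ru" "y \<in> Bpp pw pu rw ru"
  shows "ln_dist (G x) (G y) r \<le> (\<Sum>s\<in>UNIV. A $ r $ s * ln_dist x y s)"
proof -
  have p: "pw > 0" "pu > 0" using pw pu by simp_all
  have G_pos: "fst (G z) $ i $ j > 0" "snd (G z) $ a $ b > 0" if "z \<in> Bpp pw pu rw ru" for z i j a b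
    using G_in_Spp[OF that] by (simp_all add: Spp_iff)
  show ?thesis
  proof (cases r)
    case None
    have "\<bar>ln (snd (G y) $ a $ b) - ln (snd (G x) $ a $ b)\<bar>
        \<le> (\<Sum>k\<in>UNIV. A $ None $ Some k * ln_dist_w x y k) + A $ None $ None * ln_dist_u x y" for a b
      using G_components_differentiable(2) G_pos(2) H3 H4
      by (intro abs_ln_diff_le_ln_dists[OF assms p]) blast+
    then have "ln_dist_u (G x) (G y)
        \<le> (\<Sum>k\<in>UNIV. A $ None $ Some k * ln_dist_w x y k) + A $ None $ None * ln_dist_u x y"
      unfolding ln_dist_u_def[of "G x"] by (intro Max_setcompr2_le) (simp add: abs_minus_commute)
    then show ?thesis
      using None by (simp add: ln_dist_def sum_UNIV_option add.commute)
  next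
    case (Some i)
    have "\<bar>ln (fst (G y) $ i $ j) - ln (fst (G x) $ i $ j)\<bar>
        \<le> (\<Sum>k\<in>UNIV. A $ Some i $ Some k * ln_dist_w x y k) + A $ Some i $ None * ln_dist_u x y" for j
      using G_components_differentiable(1) G_pos(1) H1 H2
      by (intro abs_ln_diff_le_ln_dists[OF assms p]) blast+
    then have "ln_dist_w (G x) (G y) i
        \<le> (\<Sum>k\<in>UNIV. A $ Some i $ Some k * ln_dist_w x y k) + A $ Some i $ None * ln_dist_u x y"
      unfolding ln_dist_w_def[of "G x"] by (intro Max_setcompr_le) (simp add: abs_minus_commute)
    then show ?thesis
      using Some by (simp add: ln_dist_def sum_UNIV_option add.commute)
  qed
qed

lemma mu_gamma_G_le:
  assumes "x \<in> Bpp pw pu rw ru" "y \<in> Bpp pw pu rw ru"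
  shows "mu_gamma \<gamma> (G x) (G y) \<le> \<theta> * mu_gamma \<gamma> x y"
  unfolding mu_gamma_eq_sum_ln_dist
  using gamma_nonneg gamma_eig ln_dist_G_le[OF assms] by (rule weighted_sum_le_left_eigenvalue)

lemma iterate_in_Spp: "x0 \<in> Spp pw pu rw ru \<Longrightarrow> (G ^^ k) x0 \<in> Spp pw pu rw ru"
  by (induction k) (auto intro!: G_in_Spp dest: subsetD[OF Spp_subset_Bpp])

lemma mu_gamma_iterates_le:
  assumes x0: "x0 \<in> Spp pw pu rw ru" and "k \<le> m"
  shows "mu_gamma \<gamma> ((G ^^ k) x0) ((G ^^ m) x0) \<le> \<theta> ^ k * mu_gamma \<gamma> (G x0) x0 / (1 - \<theta>)"
proof (rule geometric_tail_bound[where d="mu_gamma \<gamma>" and x="\<lambda>k. (G ^^ k) x0", OF _ _ _ theta])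
  show "mu_gamma \<gamma> ((G ^^ k) x0) ((G ^^ Suc k) x0) \<le> \<theta> ^ k * mu_gamma \<gamma> (G x0) x0" for k
  proof (induction k)
    case (Suc k)
    have "(G ^^ k) x0 \<in> Bpp pw pu rw ru" "(G ^^ Suc k) x0 \<in> Bpp pw pu rw ru"
      using iterate_in_Spp[OF x0] Spp_subset_Bpp by blast+
    then have "mu_gamma \<gamma> ((G ^^ Suc k) x0) ((G ^^ Suc (Suc k)) x0) \<le> \<theta> * mu_gamma \<gamma> ((G ^^ k) x0) ((G ^^ Suc k) x0)"
      using mu_gamma_G_le by simp
    also have "\<dots> \<le> \<theta> * (\<theta> ^ k * mu_gamma \<gamma> (G x0) x0)"
      using Suc theta(1) by (rule mult_left_mono)
    finally show ?case by simp
  qed (simp add: mu_gamma_commute)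
qed (simp_all add: mu_gamma_triangle[OF gamma_nonneg] mu_gamma_self mu_gamma_nonneg[OF gamma_nonneg] \<open>k \<le> m\<close>)

lemma abs_ln_iterates_le:
  assumes x0: "x0 \<in> Spp pw pu rw ru" and "k \<le> m"
  shows "\<bar>ln (fst ((G ^^ k) x0) $ i $ j) - ln (fst ((G ^^ m) x0) $ i $ j)\<bar>
           \<le> \<theta> ^ k * (mu_gamma \<gamma> (G x0) x0 / (1 - \<theta>) / \<gamma> $ Some i)"
    and "\<bar>ln (snd ((G ^^ k) x0) $ a $ b) - ln (snd ((G ^^ m) x0) $ a $ b)\<bar>
           \<le> \<theta> ^ k * (mu_gamma \<gamma> (G x0) x0 / (1 - \<theta>) / \<gamma> $ None)"
proof -
  let ?x = "(G ^^ k) x0" and ?y = "(G ^^ m) x0"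
  have g: "\<gamma> $ r > 0" for r using gamma_pos by blast
  have "\<bar>ln (fst ?x $ i $ j) - ln (fst ?y $ i $ j)\<bar> \<le> mu_gamma \<gamma> ?x ?y / \<gamma> $ Some i"
    using g abs_ln_diff_le_ln_dist_w[of ?x i j ?y] ln_dist_w_le_mu_gamma[OF gamma_nonneg, of i ?x ?y]
    by (simp add: pos_le_divide_eq mult.commute) (meson g less_imp_le mult_left_mono order_trans)
  also have "\<dots> \<le> \<theta> ^ k * mu_gamma \<gamma> (G x0) x0 / (1 - \<theta>) / \<gamma> $ Some i"
    by (rule divide_right_mono[OF mu_gamma_iterates_le[OF assms]]) (simp add: g less_imp_le)
  finally show "\<bar>ln (fst ?x $ i $ j) - ln (fst ?y $ i $ j)\<bar> \<le> \<theta> ^ k * (mu_gamma \<gamma> (G x0) x0 / (1 - \<theta>) / \<gamma> $ Some i)"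
    by simp
  have "\<bar>ln (snd ?x $ a $ b) - ln (snd ?y $ a $ b)\<bar> \<le> mu_gamma \<gamma> ?x ?y / \<gamma> $ None"
    using g abs_ln_diff_le_ln_dist_u[of ?x a b ?y] ln_dist_u_le_mu_gamma[OF gamma_nonneg, of ?x ?y]
    by (simp add: pos_le_divide_eq mult.commute) (meson g less_imp_le mult_left_mono order_trans)
  also have "\<dots> \<le> \<theta> ^ k * mu_gamma \<gamma> (G x0) x0 / (1 - \<theta>) / \<gamma> $ None"
    by (rule divide_right_mono[OF mu_gamma_iterates_le[OF assms]]) (simp add: g less_imp_le)
  finally show "\<bar>ln (snd ?x $ a $ b) - ln (snd ?y $ a $ b)\<bar> \<le> \<theta> ^ k * (mu_gamma \<gamma> (G x0) x0 / (1 - \<theta>) / \<gamma> $ None)"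
    by simp
qed

text \<open>The limit is taken in logarithmic coordinates, where the iterates are Cauchy; this makes
  its entries positive by construction.\<close>

definition iterate_limit :: "(real^'n^'k) \<times> (real^'d^'n) \<Rightarrow> (real^'n^'k) \<times> (real^'d^'n)" where
  "iterate_limit x0 = ((\<chi> i j. exp (lim (\<lambda>k. ln (fst ((G ^^ k) x0) $ i $ j)))),
                       (\<chi> a b. exp (lim (\<lambda>k. ln (snd ((G ^^ k) x0) $ a $ b)))))"

lemma iterates_converge:
  assumes x0: "x0 \<in> Spp pw pu rw ru"
  shows "(\<lambda>k. (G ^^ k) x0) \<longlonglongrightarrow> iterate_limit x0"
proof -
  have pos: "fst ((G ^^ k) x0) $ i $ j > 0" "snd ((G ^^ k) x0) $ a $ b > 0" for k i j a b
    using iterate_in_Spp[OF x0, of k] by (simp_all add: Spp_iff)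
  have "convergent (\<lambda>k. ln (fst ((G ^^ k) x0) $ i $ j))" for i j
    by (rule convergent_if_geometric_tail[OF abs_ln_iterates_le(1)[OF x0] theta])
  moreover have "convergent (\<lambda>k. ln (snd ((G ^^ k) x0) $ a $ b))" for a b
    by (rule convergent_if_geometric_tail[OF abs_ln_iterates_le(2)[OF x0] theta])
  ultimately have "(\<lambda>k. exp (ln (fst ((G ^^ k) x0) $ i $ j))) \<longlonglongrightarrow> fst (iterate_limit x0) $ i $ j"
    "(\<lambda>k. exp (ln (snd ((G ^^ k) x0) $ a $ b))) \<longlonglongrightarrow> snd (iterate_limit x0) $ a $ b" for i j a b
    unfolding iterate_limit_def by (auto intro: tendsto_exp simp: convergent_LIMSEQ_iff)
  then have "(\<lambda>k. fst ((G ^^ k) x0)) \<longlonglongrightarrow> fst (iterate_limit x0)"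
    "(\<lambda>k. snd ((G ^^ k) x0)) \<longlonglongrightarrow> snd (iterate_limit x0)"
    using pos by (auto intro!: vec_tendstoI)
  then show ?thesis
    using tendsto_Pair by fastforce
qed

lemma iterate_limit_in_Spp:
  assumes x0: "x0 \<in> Spp pw pu rw ru"
  shows "iterate_limit x0 \<in> Spp pw pu rw ru"
proof -
  let ?x = "iterate_limit x0"
  have lim: "(\<lambda>k. fst ((G ^^ k) x0) $ i $ j) \<longlonglongrightarrow> fst ?x $ i $ j"
    "(\<lambda>k. snd ((G ^^ k) x0) $ a $ b) \<longlonglongrightarrow> snd ?x $ a $ b" for i j a b
    using iterates_converge[OF x0] by (auto intro!: tendsto_intros)
  have pos: "\<forall>i j. fst ?x $ i $ j > 0" "\<forall>a b. snd ?x $ a $ b > 0"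
    unfolding iterate_limit_def by simp_all
  have "(\<Sum>j\<in>UNIV. \<bar>fst ?x $ i $ j\<bar> powr pw) > 0" "(\<Sum>a\<in>UNIV. \<Sum>b\<in>UNIV. \<bar>snd ?x $ a $ b\<bar> powr pu) > 0"
    for i
    using pos by (auto intro!: sum_pos simp: less_imp_neq[symmetric])
  then have "(\<lambda>k. vnorm pw (fst ((G ^^ k) x0) $ i)) \<longlonglongrightarrow> vnorm pw (fst ?x $ i)"
    and "(\<lambda>k. mnorm pu (snd ((G ^^ k) x0))) \<longlonglongrightarrow> mnorm pu (snd ?x)" for i
    unfolding vnorm_def mnorm_def using pos
    by (auto intro!: tendsto_powr tendsto_sum tendsto_rabs lim simp: less_imp_neq[symmetric])
  moreover have "vnorm pw (fst ((G ^^ k) x0) $ i) = rw" "mnorm pu (snd ((G ^^ k) x0)) = ru" for k i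
    using iterate_in_Spp[OF x0, of k] by (simp_all add: Spp_iff)
  ultimately have "(\<lambda>k. rw) \<longlonglongrightarrow> vnorm pw (fst ?x $ i)" "(\<lambda>k. ru) \<longlonglongrightarrow> mnorm pu (snd ?x)" for i
    by simp_all
  then have "vnorm pw (fst ?x $ i) = rw" "mnorm pu (snd ?x) = ru" for i
    using LIMSEQ_unique[OF _ tendsto_const] by blast+
  then show ?thesis using pos by (simp add: Spp_iff)
qed

lemma iterate_limit_fixed:
  assumes x0: "x0 \<in> Spp pw pu rw ru"
  shows "G (iterate_limit x0) = iterate_limit x0"
proof -
  let ?x = "iterate_limit x0"
  have B: "?x \<in> Bpp pw pu rw ru" using iterate_limit_in_Spp[OF x0] Spp_subset_Bpp by blast
  have "(\<lambda>k. G ((G ^^ k) x0)) \<longlonglongrightarrow> ?x"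
    using LIMSEQ_Suc[OF iterates_converge[OF x0]] by simp
  then have "(\<lambda>k. fst (G ((G ^^ k) x0)) $ i $ j) \<longlonglongrightarrow> fst ?x $ i $ j"
    "(\<lambda>k. snd (G ((G ^^ k) x0)) $ a $ b) \<longlonglongrightarrow> snd ?x $ a $ b" for i j a b
    by (auto intro!: tendsto_intros)
  moreover have "isCont (\<lambda>y. fst (G y) $ i $ j) ?x" "isCont (\<lambda>y. snd (G y) $ a $ b) ?x" for i j a b
    using differentiable_imp_continuous_within[OF G_components_differentiable(1)[OF B]]
      differentiable_imp_continuous_within[OF G_components_differentiable(2)[OF B]]
    by (simp_all add: continuous_at)
  then have "(\<lambda>k. fst (G ((G ^^ k) x0)) $ i $ j) \<longlonglongrightarrow> fst (G ?x) $ i $ j"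
    and "(\<lambda>k. snd (G ((G ^^ k) x0)) $ a $ b) \<longlonglongrightarrow> snd (G ?x) $ a $ b" for i j a b
    using isCont_tendsto_compose[OF _ iterates_converge[OF x0]] by blast+
  ultimately show ?thesis
    using LIMSEQ_unique by (metis prod_eq_iff vec_eq_iff)
qed

definition error_scale :: real where
  "error_scale = min (\<gamma> $ None / ru) (Min {\<gamma> $ Some t / rw | t. True})"

lemma error_scale: "error_scale > 0" "error_scale * ru \<le> \<gamma> $ None" "\<forall>i. error_scale * rw \<le> \<gamma> $ Some i"
proof -
  have "Min {\<gamma> $ Some t / rw | t. True} > 0"
    using gamma_pos rw by (simp add: full_SetCompr_eq)
  then show "error_scale > 0" unfolding error_scale_def using gamma_pos ru by simp
  have "error_scale \<le> \<gamma> $ None / ru" unfolding error_scale_def by simp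
  then show "error_scale * ru \<le> \<gamma> $ None" using ru by (simp add: le_divide_eq)
  have "Min {\<gamma> $ Some t / rw | t. True} \<le> \<gamma> $ Some i / rw" for i
    by (intro Min_le) (auto simp: full_SetCompr_eq)
  then have "error_scale \<le> \<gamma> $ Some i / rw" for i
    unfolding error_scale_def by (rule min.coboundedI2)
  then show "\<forall>i. error_scale * rw \<le> \<gamma> $ Some i"
    using rw by (simp add: le_divide_eq)
qed

lemma supnorm_le_mu_gamma_Spp:
  "x \<in> Spp pw pu rw ru \<Longrightarrow> y \<in> Spp pw pu rw ru \<Longrightarrow> supnorm (x - y) \<le> mu_gamma \<gamma> x y / error_scale"
  using pw pu error_scale
  by (intro supnorm_le_mu_gamma[OF gamma_nonneg, where pw=pw and pu=pu and rw=rw and ru=ru]) auto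

lemma fixed_point_unique:
  assumes "x \<in> Spp pw pu rw ru" "y \<in> Spp pw pu rw ru" "G x = x" "G y = y"
  shows "x = y"
proof -
  have "x \<in> Bpp pw pu rw ru" "y \<in> Bpp pw pu rw ru" using assms(1,2) Spp_subset_Bpp by blast+
  then have "mu_gamma \<gamma> x y \<le> \<theta> * mu_gamma \<gamma> x y"
    using mu_gamma_G_le assms(3,4) by metis
  then have "(1 - \<theta>) * mu_gamma \<gamma> x y \<le> 0" by (simp add: algebra_simps)
  then have "mu_gamma \<gamma> x y \<le> 0" using theta by (simp add: mult_le_0_iff)
  then have "supnorm (x - y) \<le> 0"
    using supnorm_le_mu_gamma_Spp[OF assms(1,2)] error_scale(1) divide_nonpos_pos by fastforce
  then have "fst x $ i $ j = fst y $ i $ j" "snd x $ a $ b = snd y $ a $ b" for i j a b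
    using abs_le_supnorm(1)[of "x - y" i j] abs_le_supnorm(2)[of "x - y" a b] by simp_all
  then show ?thesis by (simp add: prod_eq_iff vec_eq_iff)
qed

lemma iterates_error_bound:
  assumes x0: "x0 \<in> Spp pw pu rw ru"
  shows "supnorm ((G ^^ k) x0 - iterate_limit x0)
           \<le> \<theta> ^ k * mu_gamma \<gamma> (G x0) x0 / ((1 - \<theta>) * error_scale)"
proof -
  let ?D = "\<theta> ^ k * mu_gamma \<gamma> (G x0) x0 / ((1 - \<theta>) * error_scale)" and ?x = "\<lambda>k. (G ^^ k) x0"
  have far: "supnorm (?x k - ?x m) \<le> ?D" if "k \<le> m" for m
  proof -
    have "supnorm (?x k - ?x m) \<le> mu_gamma \<gamma> (?x k) (?x m) / error_scale"
      using iterate_in_Spp[OF x0] by (intro supnorm_le_mu_gamma_Spp)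
    also have "\<dots> \<le> ?D"
      using divide_right_mono[OF mu_gamma_iterates_le[OF x0 that], of error_scale] error_scale(1)
      by (simp add: divide_divide_eq_left mult.commute)
    finally show ?thesis .
  qed
  have lim: "(\<lambda>m. fst (?x k - ?x m) $ i $ j) \<longlonglongrightarrow> fst (?x k - iterate_limit x0) $ i $ j"
    "(\<lambda>m. snd (?x k - ?x m) $ a $ b) \<longlonglongrightarrow> snd (?x k - iterate_limit x0) $ a $ b" for i j a b
    using iterates_converge[OF x0] by (auto intro!: tendsto_intros)
  have "\<bar>fst (?x k - iterate_limit x0) $ i $ j\<bar> \<le> ?D" for i j
  proof (rule LIMSEQ_le_const2[OF tendsto_rabs[OF lim(1)]])
    show "\<exists>N. \<forall>m\<ge>N. \<bar>fst (?x k - ?x m) $ i $ j\<bar> \<le> ?D"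
      using order_trans[OF abs_le_supnorm(1) far] by blast
  qed
  moreover have "\<bar>snd (?x k - iterate_limit x0) $ a $ b\<bar> \<le> ?D" for a b
  proof (rule LIMSEQ_le_const2[OF tendsto_rabs[OF lim(2)]])
    show "\<exists>N. \<forall>m\<ge>N. \<bar>snd (?x k - ?x m) $ a $ b\<bar> \<le> ?D"
      using order_trans[OF abs_le_supnorm(2) far] by blast
  qed
  ultimately show ?thesis by (rule supnorm_le)
qed

lemma crit_iff_fixed: "x \<in> Spp pw pu rw ru \<Longrightarrow> is_crit pw pu \<Phi> x \<longleftrightarrow> G x = x"
  using GPhi_fixed_iff_crit[OF pw pu rw ru] grad_pos Spp_subset_Bpp by blast

lemma Splus_max_exists: "\<exists>y\<in>Splus pw pu rw ru. \<forall>z\<in>Splus pw pu rw ru. \<Phi> z \<le> \<Phi> y"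
proof (rule continuous_attains_sup)
  show "compact (Splus pw pu rw ru :: ((real^'n^'k) \<times> (real^'d^'n)) set)"
    using closed_Splus[of pw pu rw ru] bounded_Splus[of pw pu rw ru] pw pu
    by (simp add: compact_eq_bounded_closed)
  show "Splus pw pu rw ru \<noteq> {}"
    using Spp_nonempty[of pw pu rw ru] pw pu rw ru by (auto simp: Spp_def)
  have "\<Phi> differentiable (at x)" for x
    using C1 unfolding C1_on_def differentiable_def by blast
  then show "continuous_on (Splus pw pu rw ru) \<Phi>"
    by (simp add: differentiable_imp_continuous_on differentiable_at_imp_differentiable_on)
qed

lemma Splus_max_imp_fixed:
  assumes "y \<in> Splus pw pu rw ru" "\<forall>z\<in>Splus pw pu rw ru. \<Phi> z \<le> \<Phi> y"
  shows "y \<in> Spp pw pu rw ru" "G y = y"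
proof -
  have "\<Phi> differentiable (at y)"
    using C1 unfolding C1_on_def differentiable_def by blast
  then have "y \<in> Spp pw pu rw ru \<and> is_crit pw pu \<Phi> y"
    using Splus_max_imp_crit[OF pw pu rw ru assms] grad_pos assms(1) by blast
  then show "y \<in> Spp pw pu rw ru" "G y = y" using crit_iff_fixed by blast+
qed

theorem unique_critical_point:
  "\<exists>xs. xs \<in> Spp pw pu rw ru \<and> is_crit pw pu \<Phi> xs
     \<and> (\<forall>y\<in>Spp pw pu rw ru. is_crit pw pu \<Phi> y \<longrightarrow> y = xs)
     \<and> (\<forall>y\<in>Splus pw pu rw ru. \<Phi> y \<le> \<Phi> xs)
     \<and> (\<forall>x0\<in>Spp pw pu rw ru. (\<lambda>k. (G ^^ k) x0) \<longlonglongrightarrow> xs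
          \<and> (\<forall>k. supnorm ((G ^^ k) x0 - xs) \<le> \<theta> ^ k * mu_gamma \<gamma> (G x0) x0 / ((1 - \<theta>) * error_scale)))"
proof -
  obtain xs where xs: "xs \<in> Splus pw pu rw ru" "\<forall>z\<in>Splus pw pu rw ru. \<Phi> z \<le> \<Phi> xs"
    using Splus_max_exists by blast
  note xs_fixed = Splus_max_imp_fixed[OF xs]
  have unique: "y = xs" if "y \<in> Spp pw pu rw ru" "G y = y" for y
    using fixed_point_unique that xs_fixed by blast
  have limit: "iterate_limit x0 = xs" if "x0 \<in> Spp pw pu rw ru" for x0
    using unique iterate_limit_in_Spp[OF that] iterate_limit_fixed[OF that] by blast
  show ?thesis
  proof (intro exI[of _ xs] conjI ballI impI allI)
    show "xs \<in> Spp pw pu rw ru" "is_crit pw pu \<Phi> xs"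
      using xs_fixed crit_iff_fixed by blast+
    show "y = xs" if "y \<in> Spp pw pu rw ru" "is_crit pw pu \<Phi> y" for y
      using that unique crit_iff_fixed by blast
    show "\<Phi> y \<le> \<Phi> xs" if "y \<in> Splus pw pu rw ru" for y
      using that xs(2) by blast
    fix x0 :: "(real^'n^'k) \<times> (real^'d^'n)" assume x0: "x0 \<in> Spp pw pu rw ru"
    show "(\<lambda>k. (G ^^ k) x0) \<longlonglongrightarrow> xs"
      using iterates_converge[OF x0] limit[OF x0] by simp
    show "supnorm ((G ^^ k) x0 - xs) \<le> \<theta> ^ k * mu_gamma \<gamma> (G x0) x0 / ((1 - \<theta>) * error_scale)" for k
      using iterates_error_bound[OF x0] limit[OF x0] by simp
  qed
qed

end

theorem mainTheorem7:
  fixes \<Phi> :: "(real^'n::finite^'k::finite) \<times> (real^'d::finite^'n) \<Rightarrow> real"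
    and pw pu rw ru :: real
    and A :: "real^('k option)^('k option)"
    and \<gamma> :: "real^('k option)"
  assumes pw: "pw > 1" and pu: "pu > 1" and rw: "rw > 0" and ru: "ru > 0"
    and C1: "C1_on UNIV \<Phi>"
    and C2: "\<exists>U. open U \<and> Bpp pw pu rw ru \<subseteq> U \<and> C2_on U \<Phi>"
    and grad_pos: "\<forall>x \<in> Splus pw pu rw ru \<union> Bpp pw pu rw ru.
                     (\<forall>i j. dw \<Phi> x i j > 0) \<and> (\<forall>a b. du \<Phi> x a b > 0)"
    and A_nonneg: "\<forall>r s. A$r$s \<ge> 0"
    and H1: "\<forall>x\<in>Bpp pw pu rw ru. \<forall>i k j.
        (\<Sum>l\<in>UNIV. \<bar>dw (\<lambda>y. fst (GPhi pw pu rw ru \<Phi> y) $ i $ j) x k l\<bar> * fst x $ k $ l)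
          \<le> A$(Some i)$(Some k) * fst (GPhi pw pu rw ru \<Phi> x) $ i $ j"
    and H2: "\<forall>x\<in>Bpp pw pu rw ru. \<forall>i j.
        (\<Sum>a\<in>UNIV. \<Sum>b\<in>UNIV. \<bar>du (\<lambda>y. fst (GPhi pw pu rw ru \<Phi> y) $ i $ j) x a b\<bar> * snd x $ a $ b)
          \<le> A$(Some i)$None * fst (GPhi pw pu rw ru \<Phi> x) $ i $ j"
    and H3: "\<forall>x\<in>Bpp pw pu rw ru. \<forall>k a b.
        (\<Sum>l\<in>UNIV. \<bar>dw (\<lambda>y. snd (GPhi pw pu rw ru \<Phi> y) $ a $ b) x k l\<bar> * fst x $ k $ l)
          \<le> A$None$(Some k) * snd (GPhi pw pu rw ru \<Phi> x) $ a $ b"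
    and H4: "\<forall>x\<in>Bpp pw pu rw ru. \<forall>a b.
        (\<Sum>a'\<in>UNIV. \<Sum>b'\<in>UNIV. \<bar>du (\<lambda>y. snd (GPhi pw pu rw ru \<Phi> y) $ a $ b) x a' b'\<bar> * snd x $ a' $ b')
          \<le> A$None$None * snd (GPhi pw pu rw ru \<Phi> x) $ a $ b"
    and gamma_pos: "\<forall>r. \<gamma>$r > 0"
    and gamma_eig: "\<exists>\<theta>::real. \<forall>s. (\<Sum>r\<in>UNIV. A$r$s * \<gamma>$r) = \<theta> * \<gamma>$s"
    and rho_lt1: "spec_rad A < 1"
  shows "\<exists>xs. xs \<in> Spp pw pu rw ru \<and> is_crit pw pu \<Phi> xs
           \<and> (\<forall>y\<in>Spp pw pu rw ru. is_crit pw pu \<Phi> y \<longrightarrow> y = xs)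
           \<and> (\<forall>y\<in>Splus pw pu rw ru. \<Phi> y \<le> \<Phi> xs)
           \<and> (\<forall>x0\<in>Spp pw pu rw ru.
                 (\<lambda>k. (GPhi pw pu rw ru \<Phi> ^^ k) x0) \<longlonglongrightarrow> xs
               \<and> (\<forall>k::nat. supnorm ((GPhi pw pu rw ru \<Phi> ^^ k) x0 - xs)
                   \<le> spec_rad A ^ k * mu_gamma \<gamma> (GPhi pw pu rw ru \<Phi> x0) x0
                     / ((1 - spec_rad A) * min (\<gamma>$None / ru) (Min {\<gamma>$(Some t) / rw | t. True}))))"
proof -
  obtain \<theta> where eig: "\<forall>s. (\<Sum>r\<in>UNIV. A$r$s * \<gamma>$r) = \<theta> * \<gamma>$s" using gamma_eig by blast
  have "\<gamma> \<noteq> 0" using gamma_pos by (metis less_irrefl zero_index)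
  then have \<theta>: "0 \<le> \<theta>" "\<theta> \<le> spec_rad A"
    using left_eigenvalue_nonneg[OF A_nonneg gamma_pos eig] left_eigenvalue_le_spec_rad[OF _ eig] by auto
  interpret GPhi_contraction \<Phi> pw pu rw ru A \<gamma> \<theta>
    using assms eig \<theta> by unfold_locales auto
  have "\<theta> ^ k * mu_gamma \<gamma> (G x0) x0 / ((1 - \<theta>) * error_scale)
      \<le> spec_rad A ^ k * mu_gamma \<gamma> (G x0) x0 / ((1 - spec_rad A) * error_scale)" for k x0
    using \<theta> rho_lt1 error_scale(1) by (intro geometric_error_mono) (auto simp: mu_gamma_nonneg[OF gamma_nonneg])
  then show ?thesis
    using unique_critical_point unfolding error_scale_def by (meson order_trans)
qed

end
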